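(* Consider the class of greedy MPP strategies defined below. (a) For every integer $\Delta_{in}\ge 2$ and every integer $g\ge 2$ there is a family of DAGs $G_n$ (with $n\to\infty$) of maximum in-degree $\Delta_{in}$, together with $k=2$ and a value of $r$, such that every strategy in the greedy class has cost at least $\bigl(\tfrac15\Delta_{in}-1\bigr)\cdot\mathrm{OPT}$ for all sufficiently large $n$. (b) For every integer $g\ge 2$ there is a family of DAGs $G_n$ (with $n\to\infty$), with $k=2$ and $r\ge n$, such that the ratio between the cost of any strategy in the greedy class and $\mathrm{OPT}$ is at least $1+\tfrac23 g-o(1)$ as $n\to\infty$.
   Context: Multiprocessor red-blue pebbling (MPP). Input: a DAG $G=(V,E)$ with $n=|V|$ and positive integers $k$ (number of processors), $r$ (fast-memory size per processor), $g$ (cost of an I/O step). $\Delta_{in}$ denotes the maximum in-degree of $G$; sources/sinks are nodes of in-degree/out-degree $0$. A configuration is a tuple $(R^1,\dots,R^k,B)$ of subsets of $V$ ($R^j$ = nodes carrying a red pebble of processor $j$, $B$ = nodes carrying a blue pebble); it is valid if $|R^j|\le r$ for all $j$. The initial configuration has all sets empty; a configuration is terminal if every sink lies in $B\cup\bigcup_j R^j$. The transition rules are: (R1) for some $m\le k$, pairwise distinct processors $j_1,\dots,j_m$ and nodes $v_1,\dots,v_m$ with $v_i\in R^{j_i}$, add each $v_i$ to $B$ (cost $g$); (R2) for some $m\le k$, pairwise distinct processors $j_1,\dots,j_m$ and nodes $v_1,\dots,v_m\in B$, add each $v_i$ to $R^{j_i}$ (cost $g$); (R3) for some $m\le k$,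 pairwise distinct processors $j_1,\dots,j_m$ and nodes $v_1,\dots,v_m$ such that every in-neighbor of $v_i$ lies in $R^{j_i}$, add each $v_i$ to $R^{j_i}$ (cost $1$); (R4) remove a single red or blue pebble (cost $0$). A pebbling strategy is a sequence of valid configurations starting at the initial configuration and ending at a terminal one, each obtained from its predecessor by one rule; its cost is the sum of the costs of the rules applied. $\mathrm{OPT}$ denotes the minimum cost of a pebbling strategy. Applications of (R1),(R2) are called I/O steps and applications of (R3) compute steps. Greedy class: a strategy belongs to the class if it proceeds as follows. First, the processors compute pairwise distinct source nodes in parallel. Afterwards, repeatedly: call a node ready if it has not yet been computed on any processor but all its in-neighbors have been computed on some processor. Each processor $p$ selects as its next-goal node a ready node maximizing the number of in-neighbors carrying a red pebble of $p$ (alternatively: maximizing the fraction of its in-neighbors carrying a red pebble of $p$; source nodes may be assigned fraction $0$ or $1$), with ties broken arbitrarily and distinct processors choosing distinct nodes (if two processors would choose the same node, it is given to one of them and the other chooses among the remaining ready nodes by the same rule). The processors then compute their next-goal nodes in a common (R3) step; before that step they may perform any I/O steps, deletions, and recomputations of nodes previously computed on the same processor. The only new nodes ever computed by a processor are its next-goal nodes. *)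

theory Defs
  imports Complex_Main
begin

definition in_nbrs :: "('v \<times> 'v) set \<Rightarrow> 'v \<Rightarrow> 'v set" where
  "in_nbrs E v = {u. (u, v) \<in> E}"

definition is_dag :: "'v set \<Rightarrow> ('v \<times> 'v) set \<Rightarrow> bool" where
  "is_dag V E \<longleftrightarrow> finite V \<and> E \<subseteq> V \<times> V \<and> acyclic E"

definition max_indeg :: "'v set \<Rightarrow> ('v \<times> 'v) set \<Rightarrow> nat" where
  "max_indeg V E = Max ((\<lambda>v. card (in_nbrs E v)) ` V)"

definition is_sink :: "'v set \<Rightarrow> ('v \<times> 'v) set \<Rightarrow> 'v \<Rightarrow> bool" where
  "is_sink V E v \<longleftrightarrow> v \<in> V \<and> {w. (v, w) \<in> E} = {}"

text \<open>A configuration: red pebbles of processor j (processors are 0..k-1) and blue pebbles.\<close>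
type_synonym 'v config = "(nat \<Rightarrow> 'v set) \<times> 'v set"

datatype 'v move =
    Save "(nat \<times> 'v) list"
  | Load "(nat \<times> 'v) list"
  | Compute "(nat \<times> 'v) list"
  | DelRed nat 'v
  | DelBlue 'v

definition multi_ok :: "nat \<Rightarrow> (nat \<times> 'v) list \<Rightarrow> bool" where
  "multi_ok k ps \<longleftrightarrow> ps \<noteq> [] \<and> distinct (map fst ps) \<and> (\<forall>(j, v) \<in> set ps. j < k)"

fun move_ok :: "'v set \<Rightarrow> ('v \<times> 'v) set \<Rightarrow> nat \<Rightarrow> 'v move \<Rightarrow> 'v config \<Rightarrow> bool" where
  "move_ok V E k (Save ps) (R, B) = (multi_ok k ps \<and> (\<forall>(j, v) \<in> set ps. v \<in> R j))"
| "move_ok V E k (Load ps) (R, B) = (multi_ok k ps \<and> (\<forall>(j, v) \<in> set ps. v \<in> B))"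
| "move_ok V E k (Compute ps) (R, B) =
     (multi_ok k ps \<and> (\<forall>(j, v) \<in> set ps. v \<in> V \<and> in_nbrs E v \<subseteq> R j))"
| "move_ok V E k (DelRed j v) (R, B) = (j < k \<and> v \<in> R j)"
| "move_ok V E k (DelBlue v) (R, B) = (v \<in> B)"

fun apply_move :: "'v move \<Rightarrow> 'v config \<Rightarrow> 'v config" where
  "apply_move (Save ps) (R, B) = (R, B \<union> snd ` set ps)"
| "apply_move (Load ps) (R, B) = ((\<lambda>j. R j \<union> {v. (j, v) \<in> set ps}), B)"
| "apply_move (Compute ps) (R, B) = ((\<lambda>j. R j \<union> {v. (j, v) \<in> set ps}), B)"
| "apply_move (DelRed j v) (R, B) = (R(j := R j - {v}), B)"
| "apply_move (DelBlue v) (R, B) = (R, B - {v})"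

fun move_cost :: "nat \<Rightarrow> 'v move \<Rightarrow> nat" where
  "move_cost g (Save ps) = g"
| "move_cost g (Load ps) = g"
| "move_cost g (Compute ps) = 1"
| "move_cost g (DelRed j v) = 0"
| "move_cost g (DelBlue v) = 0"

fun trace :: "'v config \<Rightarrow> 'v move list \<Rightarrow> 'v config list" where
  "trace C [] = [C]"
| "trace C (m # ms) = C # trace (apply_move m C) ms"

definition init_config :: "'v config" where
  "init_config = ((\<lambda>_. {}), {})"

definition valid_config :: "nat \<Rightarrow> nat \<Rightarrow> 'v config \<Rightarrow> bool" where
  "valid_config k r C \<longleftrightarrow> (\<forall>j<k. card (fst C j) \<le> r)"

definition terminal_config :: "'v set \<Rightarrow> ('v \<times> 'v) set \<Rightarrow> nat \<Rightarrow> 'v config \<Rightarrow> bool" where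
  "terminal_config V E k C \<longleftrightarrow> (\<forall>v. is_sink V E v \<longrightarrow> v \<in> snd C \<union> (\<Union>j<k. fst C j))"

definition pebbling_strategy ::
  "'v set \<Rightarrow> ('v \<times> 'v) set \<Rightarrow> nat \<Rightarrow> nat \<Rightarrow> 'v move list \<Rightarrow> bool" where
  "pebbling_strategy V E k r ms \<longleftrightarrow>
     (\<forall>i<length ms. move_ok V E k (ms ! i) (trace init_config ms ! i)) \<and>
     (\<forall>C \<in> set (trace init_config ms). valid_config k r C) \<and>
     terminal_config V E k (last (trace init_config ms))"

definition strategy_cost :: "nat \<Rightarrow> 'v move list \<Rightarrow> nat" where
  "strategy_cost g ms = sum_list (map (move_cost g) ms)"

definition mpp_opt :: "'v set \<Rightarrow> ('v \<times> 'v) set \<Rightarrow> nat \<Rightarrow> nat \<Rightarrow> nat \<Rightarrow> nat" where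
  "mpp_opt V E k r g = (INF ms \<in> {ms. pebbling_strategy V E k r ms}. strategy_cost g ms)"

definition computed_by :: "'v move list \<Rightarrow> nat \<Rightarrow> nat \<Rightarrow> 'v set" where
  "computed_by ms i j =
     {v. \<exists>i' < i. i' < length ms \<and> (\<exists>ps. ms ! i' = Compute ps \<and> (j, v) \<in> set ps)}"

definition computed :: "'v move list \<Rightarrow> nat \<Rightarrow> 'v set" where
  "computed ms i = (\<Union>j. computed_by ms i j)"

definition is_goal_step :: "'v move list \<Rightarrow> nat \<Rightarrow> bool" where
  "is_goal_step ms i \<longleftrightarrow> i < length ms \<and>
     (\<exists>ps. ms ! i = Compute ps \<and> (\<exists>(j, v) \<in> set ps. v \<notin> computed ms i))"

definition ready :: "'v set \<Rightarrow> ('v \<times> 'v) set \<Rightarrow> 'v set \<Rightarrow> 'v set" where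
  "ready V E H = {v \<in> V. v \<notin> H \<and> in_nbrs E v \<subseteq> H}"

text \<open>The two selection rules: number of red in-neighbors, or fraction of red in-neighbors
(with sources assigned fraction 0 (False) or 1 (True)).\<close>
datatype greedy_rule = Count_Rule | Fraction_Rule bool

definition greedy_score :: "greedy_rule \<Rightarrow> ('v \<times> 'v) set \<Rightarrow> 'v set \<Rightarrow> 'v \<Rightarrow> real" where
  "greedy_score rl E Rp v =
     (case rl of
        Count_Rule \<Rightarrow> real (card (in_nbrs E v \<inter> Rp))
      | Fraction_Rule s \<Rightarrow>
          (if in_nbrs E v = {} then (if s then 1 else 0)
           else real (card (in_nbrs E v \<inter> Rp)) / real (card (in_nbrs E v))))"

text \<open>A greedy assignment of next-goal nodes to processors: processors choose in some order,
each choosing a ready node (not chosen before) maximizing its score; as many processors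
receive a goal as possible.\<close>
definition greedy_assignment ::
  "greedy_rule \<Rightarrow> 'v set \<Rightarrow> ('v \<times> 'v) set \<Rightarrow> nat \<Rightarrow> (nat \<Rightarrow> 'v set) \<Rightarrow> 'v set
     \<Rightarrow> (nat \<times> 'v) list \<Rightarrow> bool" where
  "greedy_assignment rl V E k R H asg \<longleftrightarrow>
     distinct (map fst asg) \<and> (\<forall>(j, v) \<in> set asg. j < k) \<and>
     length asg = min k (card (ready V E H)) \<and>
     (\<forall>i < length asg.
        (let p = fst (asg ! i); v = snd (asg ! i);
             Rem = ready V E H - set (map snd (take i asg))
         in v \<in> Rem \<and> (\<forall>w \<in> Rem. greedy_score rl E (R p) w \<le> greedy_score rl E (R p) v)))"

definition selection_config :: "'v move list \<Rightarrow> nat \<Rightarrow> 'v config" where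
  "selection_config ms i =
     (if i = 0 then init_config
      else trace init_config ms ! Suc (GREATEST i'. i' < i \<and> is_goal_step ms i'))"

definition greedy_strategy ::
  "greedy_rule \<Rightarrow> 'v set \<Rightarrow> ('v \<times> 'v) set \<Rightarrow> nat \<Rightarrow> nat \<Rightarrow> 'v move list \<Rightarrow> bool" where
  "greedy_strategy rl V E k r ms \<longleftrightarrow>
     pebbling_strategy V E k r ms \<and>
     \<comment> \<open>every computation is a recomputation on the same processor or a new node\<close>
     (\<forall>i < length ms. \<forall>ps. ms ! i = Compute ps \<longrightarrow>
        (\<forall>(j, v) \<in> set ps. v \<in> computed_by ms i j \<or> v \<notin> computed ms i)) \<and>
     \<comment> \<open>the first move computes (distinct) source nodes in parallel\<close>
     is_goal_step ms 0 \<and>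
     \<comment> \<open>goal steps compute exactly the greedily selected next-goal nodes\<close>
     (\<forall>i. is_goal_step ms i \<longrightarrow>
        (\<exists>ps asg. ms ! i = Compute ps \<and> (\<forall>(j, v) \<in> set ps. v \<notin> computed ms i) \<and>
           set ps = set asg \<and>
           greedy_assignment rl V E k (fst (selection_config ms i)) (computed ms i) asg))"

end

theory Submission
  imports Defs
begin

text \<open>
Both families are layered DAGs whose layer \<open>l\<close> consists of the two nodes \<open>2l\<close> and \<open>2l + 1\<close>,
each with an in-neighbour in layer \<open>l - 1\<close>. Then the ready set is always exactly the next layer,
so a greedy strategy computes the layers one after the other, the two processors taking one
node each. Since a greedy processor computes new nodes only as its own goals, every node is
computed on a single processor, and whatever the other processor needs of it must go through
slow memory.

For (b), take the ladder in which each node depends on both nodes of the previous layer: every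
layer then costs a greedy strategy a save, a load and a compute, i.e. \<open>2g + 1\<close>, while a single
processor with \<open>r \<ge> n\<close> computes all \<open>n\<close> nodes for \<open>n\<close>.

For (a), two chains of length \<open>D = \<Delta> - 2\<close> are followed by a ladder whose rung \<open>j\<close> also
depends on the whole chain of parity \<open>j\<close>. With \<open>r = D + 3\<close> a processor that has just computed
a rung node is full with its in-neighbours, which include the chain of the other parity; so at
every rung both processors reload \<open>D\<close> chain nodes, half of which they never computed
themselves, costing about \<open>D (g + 1) / 2\<close>. A schedule alternating the processors between the
rungs keeps each chain in the fast memory of one processor and pays \<open>O(g)\<close> per rung.
\<close>

lemma length_trace [simp]: "length (trace C ms) = Suc (length ms)"
  by (induction ms arbitrary: C) auto

lemma trace_nth_0 [simp]: "trace C ms ! 0 = C"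
  by (cases ms) auto

lemma trace_not_Nil [simp]: "trace C ms \<noteq> []"
  by (cases ms) auto

lemma trace_nth_Suc:
  "i < length ms \<Longrightarrow> trace C ms ! Suc i = apply_move (ms ! i) (trace C ms ! i)"
proof (induction ms arbitrary: C i)
  case (Cons m ms)
  show ?case
  proof (cases i)
    case 0
    then show ?thesis by (cases ms) auto
  next
    case (Suc i')
    then show ?thesis using Cons by auto
  qed
qed simp

lemma last_trace: "last (trace C ms) = trace C ms ! length ms"
  by (simp add: last_conv_nth)

lemma set_trace: "set (trace C ms) = {trace C ms ! t | t. t \<le> length ms}"
  by (auto simp: in_set_conv_nth less_Suc_eq_le) (metis le_imp_less_Suc length_trace)

definition config_at :: "'v move list \<Rightarrow> nat \<Rightarrow> 'v config" where
  "config_at ms t = trace init_config ms ! t"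

lemma config_at_0 [simp]: "config_at ms 0 = init_config"
  by (simp add: config_at_def)

lemma config_at_Suc:
  "t < length ms \<Longrightarrow> config_at ms (Suc t) = apply_move (ms ! t) (config_at ms t)"
  by (simp add: config_at_def trace_nth_Suc)

lemma apply_move_Compute:
  "apply_move (Compute ps) C = ((\<lambda>j. fst C j \<union> {v. (j, v) \<in> set ps}), snd C)"
  by (cases C) auto

lemma red_pebble_added:
  "x \<in> fst (apply_move m C) q \<Longrightarrow> x \<notin> fst C q \<Longrightarrow>
     \<exists>ps. (m = Load ps \<or> m = Compute ps) \<and> (q, x) \<in> set ps"
  by (cases C; cases m) (auto split: if_splits)

lemma blue_pebble_added:
  "x \<in> snd (apply_move m C) \<Longrightarrow> x \<notin> snd C \<Longrightarrow> \<exists>ps. m = Save ps \<and> x \<in> snd ` set ps"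
  by (cases C; cases m) auto

lemma nat_first_change:
  fixes P :: "nat \<Rightarrow> bool"
  assumes "a \<le> b" "\<not> P a" "P b"
  shows "\<exists>t. a \<le> t \<and> t < b \<and> \<not> P t \<and> P (Suc t)"
  using assms
proof (induction b)
  case (Suc b)
  show ?case
  proof (cases "a \<le> b \<and> P b")
    case True
    then obtain t where "a \<le> t" "t < b" "\<not> P t" "P (Suc t)"
      using Suc.IH Suc.prems(2) by blast
    then show ?thesis by (intro exI[of _ t]) simp
  next
    case False
    with Suc.prems have "a \<le> b" "\<not> P b"
      by (auto simp: le_Suc_eq)
    with Suc.prems(3) show ?thesis by (intro exI[of _ b]) simp
  qed
qed simp

lemma red_pebble_acquired:
  assumes "a \<le> b" "b \<le> length ms" "x \<notin> fst (config_at ms a) q" "x \<in> fst (config_at ms b) q"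
  shows "\<exists>t. a \<le> t \<and> t < b \<and> (\<exists>ps. (ms ! t = Load ps \<or> ms ! t = Compute ps) \<and> (q, x) \<in> set ps)"
proof -
  obtain t where "a \<le> t" "t < b" "x \<notin> fst (config_at ms t) q" "x \<in> fst (config_at ms (Suc t)) q"
    using nat_first_change[of a b "\<lambda>t. x \<in> fst (config_at ms t) q"] assms by blast
  moreover have "x \<in> fst (apply_move (ms ! t) (config_at ms t)) q"
    using \<open>t < b\<close> assms(2) calculation(4) by (simp add: config_at_Suc)
  ultimately show ?thesis
    using red_pebble_added[of x "ms ! t" "config_at ms t" q] by blast
qed

lemma blue_pebble_acquired:
  assumes "a \<le> b" "b \<le> length ms" "x \<notin> snd (config_at ms a)" "x \<in> snd (config_at ms b)"
  shows "\<exists>t. a \<le> t \<and> t < b \<and> (\<exists>ps. ms ! t = Save ps)"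
proof -
  obtain t where "a \<le> t" "t < b" "x \<notin> snd (config_at ms t)" "x \<in> snd (config_at ms (Suc t))"
    using nat_first_change[of a b "\<lambda>t. x \<in> snd (config_at ms t)"] assms by blast
  moreover have "x \<in> snd (apply_move (ms ! t) (config_at ms t))"
    using \<open>t < b\<close> assms(2) calculation(4) by (simp add: config_at_Suc)
  then obtain ps where "ms ! t = Save ps"
    using blue_pebble_added[of x "ms ! t" "config_at ms t"] \<open>x \<notin> snd (config_at ms t)\<close> by blast
  with \<open>a \<le> t\<close> \<open>t < b\<close> show ?thesis by blast
qed

lemma computed_by_0 [simp]: "computed_by ms 0 j = {}"
  by (simp add: computed_by_def)

lemma computed_0 [simp]: "computed ms 0 = {}"
  by (simp add: computed_def)

lemma computed_by_Suc:
  "computed_by ms (Suc t) j = computed_by ms t j \<union>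
     {v. t < length ms \<and> (\<exists>ps. ms ! t = Compute ps \<and> (j, v) \<in> set ps)}"
  unfolding computed_by_def by (auto simp: less_Suc_eq)

lemma computed_Suc:
  "computed ms (Suc t) = computed ms t \<union>
     {v. t < length ms \<and> (\<exists>ps j. ms ! t = Compute ps \<and> (j, v) \<in> set ps)}"
  unfolding computed_def by (auto simp: computed_by_Suc)

lemma computed_by_mono: "t \<le> t' \<Longrightarrow> computed_by ms t j \<subseteq> computed_by ms t' j"
  unfolding computed_by_def by (blast intro: less_le_trans)

lemma computed_mono: "t \<le> t' \<Longrightarrow> computed ms t \<subseteq> computed ms t'"
  unfolding computed_def using computed_by_mono[of t t' ms] by blast

lemma computed_by_subset_computed: "computed_by ms t j \<subseteq> computed ms t"
  unfolding computed_def by auto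

lemma computed_by_beyond_length:
  "length ms \<le> t \<Longrightarrow> computed_by ms t j = computed_by ms (length ms) j"
  unfolding computed_by_def by (blast intro: less_le_trans)

lemma computed_beyond_length: "length ms \<le> t \<Longrightarrow> computed ms t = computed ms (length ms)"
  unfolding computed_def using computed_by_beyond_length[of ms t] by simp

lemma pebbling_strategyI:
  assumes "\<And>t. t < length ms \<Longrightarrow> move_ok V E k (ms ! t) (config_at ms t)"
    and "\<And>t. t \<le> length ms \<Longrightarrow> valid_config k r (config_at ms t)"
    and "terminal_config V E k (config_at ms (length ms))"
  shows "pebbling_strategy V E k r ms"
  using assms unfolding pebbling_strategy_def config_at_def set_trace last_trace by blast

lemma pebbling_strategy_move_ok:
  "pebbling_strategy V E k r ms \<Longrightarrow> t < length ms \<Longrightarrow> move_ok V E k (ms ! t) (config_at ms t)"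
  unfolding pebbling_strategy_def config_at_def by blast

lemma pebbling_strategy_valid:
  "pebbling_strategy V E k r ms \<Longrightarrow> t \<le> length ms \<Longrightarrow> valid_config k r (config_at ms t)"
  unfolding pebbling_strategy_def config_at_def set_trace by blast

lemma pebbling_strategy_terminal:
  "pebbling_strategy V E k r ms \<Longrightarrow> terminal_config V E k (config_at ms (length ms))"
  unfolding pebbling_strategy_def config_at_def last_trace by blast

lemma mpp_opt_le: "pebbling_strategy V E k r ms \<Longrightarrow> mpp_opt V E k r g \<le> strategy_cost g ms"
  unfolding mpp_opt_def by (rule cINF_lower) auto

lemma strategy_cost_eq_sum:
  "real (strategy_cost g ms) = (\<Sum>t = 0..<length ms. real (move_cost g (ms ! t)))"
  unfolding strategy_cost_def by (simp add: sum_list_sum_nth of_nat_sum)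

lemma pebbles_on_computed_nodes:
  assumes ok: "\<And>t. t < length ms \<Longrightarrow> move_ok V E k (ms ! t) (config_at ms t)"
    and "t \<le> length ms"
  shows "(\<forall>j. fst (config_at ms t) j \<subseteq> computed ms t) \<and> snd (config_at ms t) \<subseteq> computed ms t
     \<and> computed ms t \<subseteq> V"
  using \<open>t \<le> length ms\<close>
proof (induction t)
  case 0
  then show ?case by (simp add: init_config_def)
next
  case (Suc t)
  then have t: "t < length ms" by simp
  have IH: "\<forall>j. fst (config_at ms t) j \<subseteq> computed ms t" "snd (config_at ms t) \<subseteq> computed ms t"
    "computed ms t \<subseteq> V"
    using Suc by auto
  have mono: "computed ms t \<subseteq> computed ms (Suc t)" by (rule computed_mono) simp
  obtain R B where RB: "config_at ms t = (R, B)" by fastforce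
  have "move_ok V E k (ms ! t) (R, B)" using ok[OF t] RB by simp
  moreover have "config_at ms (Suc t) = apply_move (ms ! t) (R, B)"
    using config_at_Suc[OF t] RB by simp
  ultimately show ?case
    using IH mono RB computed_Suc[of ms t] t by (cases "ms ! t") (auto 0 3)
qed

lemma
  assumes "pebbling_strategy V E k r ms" "t \<le> length ms"
  shows red_pebbles_computed: "fst (config_at ms t) j \<subseteq> computed ms t"
    and blue_pebbles_computed: "snd (config_at ms t) \<subseteq> computed ms t"
    and computed_subset_nodes: "computed ms t \<subseteq> V"
  using pebbles_on_computed_nodes[of ms V E k t] pebbling_strategy_move_ok[OF assms(1)] assms(2)
  by blast+

lemma compute_step_ok:
  assumes "pebbling_strategy V E k r ms" "t < length ms" "ms ! t = Compute ps" "(j, v) \<in> set ps"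
  shows "in_nbrs E v \<subseteq> fst (config_at ms t) j"
proof -
  obtain R B where RB: "config_at ms t = (R, B)" by fastforce
  have "move_ok V E k (ms ! t) (R, B)" using pebbling_strategy_move_ok[OF assms(1,2)] RB by simp
  then show ?thesis using assms RB by auto
qed

lemma load_or_compute_distinct_processors:
  assumes "pebbling_strategy V E k r ms" "t < length ms" "ms ! t = Load ps \<or> ms ! t = Compute ps"
  shows "distinct (map fst ps)"
proof -
  obtain R B where RB: "config_at ms t = (R, B)" by fastforce
  have "move_ok V E k (ms ! t) (R, B)" using pebbling_strategy_move_ok[OF assms(1,2)] RB by simp
  then show ?thesis using assms(3) by (auto simp: multi_ok_def)
qed

lemma in_nbrs_computed:
  assumes "pebbling_strategy V E k r ms" "v \<in> computed ms t"
  shows "in_nbrs E v \<subseteq> computed ms t"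
proof -
  obtain i ps j where i: "i < t" "i < length ms" "ms ! i = Compute ps" "(j, v) \<in> set ps"
    using assms(2) unfolding computed_def computed_by_def by blast
  have "in_nbrs E v \<subseteq> fst (config_at ms i) j" by (rule compute_step_ok[OF assms(1) i(2-4)])
  also have "\<dots> \<subseteq> computed ms i" using red_pebbles_computed[OF assms(1)] i(2) by simp
  also have "\<dots> \<subseteq> computed ms t" using computed_mono[of i t ms] i(1) by simp
  finally show ?thesis .
qed

lemma greedy_assignment_distinct_goals:
  assumes "greedy_assignment rl V E k R H asg"
  shows "distinct (map snd asg)"
proof -
  have fresh: "snd (asg ! i) \<notin> set (map snd (take i asg))" if "i < length asg" for i
    using assms that unfolding greedy_assignment_def Let_def by auto
  have "snd (asg ! i) \<noteq> snd (asg ! j)" if "i < j" "j < length asg" for i j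
  proof -
    have "snd (asg ! i) \<in> set (map snd (take j asg))" using that
      by (metis in_set_conv_nth length_map length_take min.absorb4 nth_map nth_take)
    then show ?thesis using fresh[OF that(2)] by metis
  qed
  then show ?thesis
    by (simp add: distinct_conv_nth) (metis linorder_neqE_nat)
qed

lemma greedy_assignment_goals_ready:
  assumes "greedy_assignment rl V E k R H asg"
  shows "snd ` set asg \<subseteq> ready V E H"
proof
  fix v assume "v \<in> snd ` set asg"
  then obtain i where "i < length asg" "v = snd (asg ! i)" by (metis imageE in_set_conv_nth)
  then show "v \<in> ready V E H" using assms unfolding greedy_assignment_def Let_def by auto
qed

lemma greedy_strategy_pebbling: "greedy_strategy rl V E k r ms \<Longrightarrow> pebbling_strategy V E k r ms"
  unfolding greedy_strategy_def by blast

lemma greedy_recomputes_own_node: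
  assumes "greedy_strategy rl V E k r ms" "t < length ms" "ms ! t = Compute ps" "(j, v) \<in> set ps"
    "v \<in> computed ms t"
  shows "v \<in> computed_by ms t j"
  using assms unfolding greedy_strategy_def by fastforce

lemma greedy_new_nodes_assigned:
  assumes "greedy_strategy rl V E k r ms" "t < length ms" "ms ! t = Compute ps" "(j, v) \<in> set ps"
    "v \<notin> computed ms t"
  obtains asg where "set ps = set asg"
    "greedy_assignment rl V E k (fst (selection_config ms t)) (computed ms t) asg"
proof -
  have "is_goal_step ms t" unfolding is_goal_step_def using assms(2-5) by blast
  then show ?thesis using that assms(1,3) unfolding greedy_strategy_def by fastforce
qed

lemma greedy_computed_by_unique:
  assumes g: "greedy_strategy rl V E k r ms"
  shows "v \<in> computed_by ms t p \<Longrightarrow> v \<in> computed_by ms t q \<Longrightarrow> p = q"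
proof (induction t)
  case (Suc t)
  have old: "v \<in> computed_by ms t j" if "v \<in> computed_by ms (Suc t) j" "v \<in> computed ms t" for j
    using that greedy_recomputes_own_node[OF g] unfolding computed_by_Suc by blast
  show ?case
  proof (cases "v \<in> computed ms t")
    case True
    then show ?thesis using old Suc by blast
  next
    case False
    then have "v \<notin> computed_by ms t p" "v \<notin> computed_by ms t q"
      using computed_by_subset_computed[of ms t] by blast+
    then obtain ps where ps: "t < length ms" "ms ! t = Compute ps" "(p, v) \<in> set ps" "(q, v) \<in> set ps"
      using Suc.prems unfolding computed_by_Suc by auto
    obtain asg where "set ps = set asg"
      and "greedy_assignment rl V E k (fst (selection_config ms t)) (computed ms t) asg"
      using greedy_new_nodes_assigned[OF g ps(1-3) False] by blast
    then show ?thesis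
      using greedy_assignment_distinct_goals ps(3,4)
      by (metis distinct_map inj_onD prod.inject snd_conv)
  qed
qed simp

lemma greedy_foreign_node_loaded:
  assumes g: "greedy_strategy rl V E k r ms"
    and t: "t \<le> t'" "t' \<le> length ms"
    and u: "u \<in> computed_by ms t p" "p \<noteq> q"
    and acquired: "u \<notin> fst (config_at ms t) q" "u \<in> fst (config_at ms t') q"
  obtains t1 ps where "t \<le> t1" "t1 < t'" "ms ! t1 = Load ps" "(q, u) \<in> set ps"
proof -
  obtain t1 ps where t1: "t \<le> t1" "t1 < t'" "ms ! t1 = Load ps \<or> ms ! t1 = Compute ps"
    "(q, u) \<in> set ps"
    using red_pebble_acquired[OF t acquired] by blast
  have "u \<in> computed_by ms t1 p" using u(1) computed_by_mono[OF t1(1), of ms p] by blast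
  moreover have "ms ! t1 \<noteq> Compute ps"
  proof
    assume "ms ! t1 = Compute ps"
    moreover have "u \<in> computed ms t1"
      using \<open>u \<in> computed_by ms t1 p\<close> computed_by_subset_computed[of ms t1 p] by blast
    ultimately have "u \<in> computed_by ms t1 q"
      using greedy_recomputes_own_node[OF g _ _ t1(4)] t1(2) t(2) by simp
    then show False using greedy_computed_by_unique[OF g \<open>u \<in> computed_by ms t1 p\<close>] u(2) by blast
  qed
  ultimately show ?thesis using that t1 by blast
qed

lemma greedy_foreign_node_saved_and_loaded:
  assumes g: "greedy_strategy rl V E k r ms"
    and t: "t \<le> t'" "t' \<le> length ms"
    and u: "u \<in> computed_by ms t p" "p \<noteq> q" "u \<notin> snd (config_at ms t)"
    and acquired: "u \<notin> fst (config_at ms t) q" "u \<in> fst (config_at ms t') q"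
  shows "\<exists>t0 t1. t \<le> t0 \<and> t0 < t1 \<and> t1 < t' \<and> (\<exists>ps. ms ! t0 = Save ps) \<and> (\<exists>ps. ms ! t1 = Load ps)"
proof -
  obtain t1 ps where t1: "t \<le> t1" "t1 < t'" "ms ! t1 = Load ps" "(q, u) \<in> set ps"
    using greedy_foreign_node_loaded[OF g t u(1,2) acquired] by metis
  have "move_ok V E k (ms ! t1) (config_at ms t1)"
    using pebbling_strategy_move_ok[OF greedy_strategy_pebbling[OF g]] t1(2) t(2) by simp
  then have "u \<in> snd (config_at ms t1)"
    using t1(3,4) by (cases "config_at ms t1") auto
  then obtain t0 where "t \<le> t0" "t0 < t1" "\<exists>ps. ms ! t0 = Save ps"
    using blue_pebble_acquired[OF t1(1) _ u(3)] t1(2) t(2) by fastforce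
  then show ?thesis using t1 by blast
qed

subsection \<open>Layered DAGs of width two\<close>

text \<open>Node \<open>v\<close> lies in layer \<open>v div 2\<close>.\<close>

locale layered_dag =
  fixes M :: nat and inn :: "nat \<Rightarrow> nat set"
  assumes inn_lower_layer: "u \<in> inn v \<Longrightarrow> u div 2 < v div 2"
    and inn_previous_layer: "2 \<le> v \<Longrightarrow> v < 2 * M \<Longrightarrow> \<exists>u\<in>inn v. u div 2 = v div 2 - 1"
begin

definition nodes :: "nat set" where
  "nodes = {..<2 * M}"

definition edges :: "(nat \<times> nat) set" where
  "edges = {(u, v). v < 2 * M \<and> u \<in> inn v}"

lemma inn_less: "u \<in> inn v \<Longrightarrow> u < v"
  using inn_lower_layer[of u v] by linarith

lemma in_nbrs_edges: "in_nbrs edges v = (if v < 2 * M then inn v else {})"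
  unfolding in_nbrs_def edges_def by auto

lemma is_dag: "is_dag nodes edges"
proof -
  have "(x, y) \<in> {(u, v). u < v}\<^sup>+ \<Longrightarrow> x < y" for x y :: nat
    by (induction rule: trancl_induct) auto
  then have "acyclic {(u, v :: nat). u < v}" unfolding acyclic_def by blast
  moreover have "edges \<subseteq> {(u, v). u < v}" unfolding edges_def using inn_less by blast
  moreover have "edges \<subseteq> nodes \<times> nodes" unfolding edges_def nodes_def using inn_less by fastforce
  ultimately show ?thesis unfolding is_dag_def nodes_def using acyclic_subset by blast
qed

lemma card_nodes: "card nodes = 2 * M"
  unfolding nodes_def by simp

lemma all_nodes_computed:
  assumes ps: "pebbling_strategy nodes edges k r ms" and v: "v < 2 * M"
  shows "v \<in> computed ms (length ms)"
  using v
proof (induction "2 * M - v" arbitrary: v rule: less_induct)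
  case less
  show ?case
  proof (cases "is_sink nodes edges v")
    case True
    then have "v \<in> snd (config_at ms (length ms)) \<union> (\<Union>j<k. fst (config_at ms (length ms)) j)"
      using pebbling_strategy_terminal[OF ps] unfolding terminal_config_def by blast
    then show ?thesis
      using red_pebbles_computed[OF ps] blue_pebbles_computed[OF ps] by blast
  next
    case False
    then obtain w where "w < 2 * M" "v \<in> inn w"
      unfolding is_sink_def nodes_def edges_def using less.prems by blast
    moreover have "w \<in> computed ms (length ms)"
      using less.hyps[of w] inn_less[of v w] calculation by simp
    ultimately show ?thesis using in_nbrs_computed[OF ps] in_nbrs_edges[of w] by auto
  qed
qed

lemma ready_layer:
  assumes "l < M"
  shows "ready nodes edges {..<2 * l} = {2 * l, 2 * l + 1}"
proof -
  have "v \<in> ready nodes edges {..<2 * l} \<longleftrightarrow> v = 2 * l \<or> v = 2 * l + 1" for v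
  proof
    assume "v \<in> ready nodes edges {..<2 * l}"
    then have v: "v < 2 * M" "2 * l \<le> v" "inn v \<subseteq> {..<2 * l}"
      unfolding ready_def nodes_def using in_nbrs_edges[of v] by auto
    show "v = 2 * l \<or> v = 2 * l + 1"
    proof (rule ccontr)
      assume "\<not> (v = 2 * l \<or> v = 2 * l + 1)"
      then have "2 * l + 2 \<le> v" using v by linarith
      then obtain u where "u \<in> inn v" "u div 2 = v div 2 - 1" "l + 1 \<le> v div 2"
        using inn_previous_layer[of v] v by auto
      then show False using v(3) by fastforce
    qed
  next
    assume v: "v = 2 * l \<or> v = 2 * l + 1"
    then have "inn v \<subseteq> {..<2 * l}" using inn_lower_layer[of _ v] by fastforce
    with v assms show "v \<in> ready nodes edges {..<2 * l}"
      unfolding ready_def nodes_def using in_nbrs_edges[of v] by auto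
  qed
  then show ?thesis by blast
qed

end

locale layered_greedy = layered_dag +
  fixes rl :: greedy_rule and r :: nat and ms :: "nat move list"
  assumes greedy: "greedy_strategy rl nodes edges 2 r ms"
begin

lemma pebbling: "pebbling_strategy nodes edges 2 r ms"
  by (rule greedy_strategy_pebbling[OF greedy])

definition layer_time :: "nat \<Rightarrow> nat" where
  "layer_time l = (LEAST t. {2 * l, 2 * l + 1} \<inter> computed ms (Suc t) \<noteq> {})"

lemma computed_within_nodes: "computed ms t \<subseteq> nodes"
proof (cases "t \<le> length ms")
  case False
  then show ?thesis
    using computed_subset_nodes[OF pebbling, of "length ms"] computed_beyond_length[of ms t] by simp
qed (rule computed_subset_nodes[OF pebbling])

lemma computed_meets_lower_layers:
  assumes "v \<in> computed ms t" "l \<le> v div 2"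
  shows "\<exists>w \<in> computed ms t. w div 2 = l"
  using assms
proof (induction v rule: less_induct)
  case (less v)
  show ?case
  proof (cases "v div 2 = l")
    case False
    have "v < 2 * M" using less.prems computed_within_nodes unfolding nodes_def by auto
    moreover have "2 \<le> v" using False less.prems by linarith
    ultimately obtain u where u: "u \<in> inn v" "u div 2 = v div 2 - 1"
      using inn_previous_layer by blast
    then have "u \<in> computed ms t"
      using in_nbrs_computed[OF pebbling less.prems(1)] in_nbrs_edges \<open>v < 2 * M\<close> by auto
    moreover have "l \<le> u div 2" using u False less.prems by linarith
    ultimately show ?thesis using less.IH[of u] inn_less[OF u(1)] by blast
  qed (use less.prems in blast)
qed

lemma
  assumes "l < M"
  shows layer_not_computed_before: "{2 * l, 2 * l + 1} \<inter> computed ms (layer_time l) = {}"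
    and layer_computed_after: "{2 * l, 2 * l + 1} \<inter> computed ms (Suc (layer_time l)) \<noteq> {}"
    and layer_time_less_length: "layer_time l < length ms"
proof -
  have "2 * l \<in> computed ms (Suc (length ms))"
    using all_nodes_computed[OF pebbling] assms computed_beyond_length[of ms "Suc (length ms)"]
    by simp
  then have "{2 * l, 2 * l + 1} \<inter> computed ms (Suc (length ms)) \<noteq> {}" by blast
  then show after: "{2 * l, 2 * l + 1} \<inter> computed ms (Suc (layer_time l)) \<noteq> {}"
    unfolding layer_time_def by (rule LeastI)
  show before: "{2 * l, 2 * l + 1} \<inter> computed ms (layer_time l) = {}"
  proof (cases "layer_time l")
    case (Suc t)
    then have "t < layer_time l" by simp
    then have "\<not> ({2 * l, 2 * l + 1} \<inter> computed ms (Suc t) \<noteq> {})"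
      unfolding layer_time_def by (rule not_less_Least)
    then show ?thesis using Suc by simp
  qed simp
  show "layer_time l < length ms"
  proof (rule ccontr)
    assume "\<not> layer_time l < length ms"
    then have "computed ms (Suc (layer_time l)) = computed ms (layer_time l)"
      using computed_beyond_length[of ms "layer_time l"]
        computed_beyond_length[of ms "Suc (layer_time l)"] by simp
    then show False using before after by simp
  qed
qed

lemma computed_before_layer_time:
  assumes "l < M"
  shows "computed ms (layer_time l) \<subseteq> {..<2 * l}"
proof
  fix v assume v: "v \<in> computed ms (layer_time l)"
  show "v \<in> {..<2 * l}"
  proof (rule ccontr)
    assume "v \<notin> {..<2 * l}"
    then have "2 * l \<le> v" by simp
    then have "l \<le> v div 2" by presburger
    then obtain w where w: "w \<in> computed ms (layer_time l)" "w div 2 = l"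
      using computed_meets_lower_layers[of v "layer_time l" l] v by blast
    have "w = 2 * l \<or> w = 2 * l + 1" using w(2) by presburger
    with w have "w \<in> {2 * l, 2 * l + 1} \<inter> computed ms (layer_time l)" by blast
    then show False using layer_not_computed_before[OF assms] by blast
  qed
qed

lemma layer_time_less_Suc:
  assumes "Suc l < M"
  shows "layer_time l < layer_time (Suc l)"
proof -
  let ?T = "layer_time (Suc l)"
  obtain v where v: "v \<in> {2 * Suc l, 2 * Suc l + 1}" "v \<in> computed ms (Suc ?T)" "v \<notin> computed ms ?T"
    using layer_not_computed_before[OF assms] layer_computed_after[OF assms] by blast
  have T: "?T < length ms" using layer_time_less_length[OF assms] .
  obtain ps j where ps: "ms ! ?T = Compute ps" "(j, v) \<in> set ps"
    using v(2,3) computed_Suc[of ms ?T] by auto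
  have "v < 2 * M" "2 \<le> v" using v(1) assms by auto
  then obtain u where u: "u \<in> inn v" "u div 2 = l"
    using inn_previous_layer v(1) by fastforce
  have "u \<in> fst (config_at ms ?T) j"
    using compute_step_ok[OF pebbling T ps] u in_nbrs_edges \<open>v < 2 * M\<close> by auto
  then have "u \<in> computed ms ?T" using red_pebbles_computed[OF pebbling, of ?T j] T by auto
  moreover have "u = 2 * l \<or> u = 2 * l + 1" using u(2) by presburger
  ultimately have "{2 * l, 2 * l + 1} \<inter> computed ms ?T \<noteq> {}" by blast
  then obtain t where t: "?T = Suc t" "{2 * l, 2 * l + 1} \<inter> computed ms (Suc t) \<noteq> {}"
    by (cases ?T) auto
  then have "layer_time l \<le> t" unfolding layer_time_def by (intro Least_le)
  with t(1) show ?thesis by simp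
qed

lemma layer_time_strict_mono: "l < l' \<Longrightarrow> l' < M \<Longrightarrow> layer_time l < layer_time l'"
proof (induction l')
  case (Suc l')
  then show ?case using layer_time_less_Suc[of l'] by (metis less_SucE order.strict_trans Suc_lessD)
qed simp

text \<open>When layer \<open>l\<close> is ready, both processors receive a goal, which must be one of its nodes.\<close>

lemma layer_step:
  assumes l: "l < M" and H: "computed ms (layer_time l) = {..<2 * l}"
  obtains ps a b where "ms ! layer_time l = Compute ps"
    "set ps = {(a, 2 * l), (b, 2 * l + 1)}" "a \<noteq> b" "a < 2" "b < 2"
proof -
  let ?T = "layer_time l"
  obtain v where v: "v \<in> {2 * l, 2 * l + 1}" "v \<in> computed ms (Suc ?T)" "v \<notin> computed ms ?T"
    using layer_not_computed_before[OF l] layer_computed_after[OF l] by blast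
  have T: "?T < length ms" using layer_time_less_length[OF l] .
  obtain ps j where ps: "ms ! ?T = Compute ps" "(j, v) \<in> set ps"
    using v(2,3) computed_Suc[of ms ?T] by auto
  obtain asg where sa: "set ps = set asg"
    and ga: "greedy_assignment rl nodes edges 2 (fst (selection_config ms ?T)) (computed ms ?T) asg"
    using greedy_new_nodes_assigned[OF greedy T ps v(3)] by blast
  have rd: "ready nodes edges (computed ms ?T) = {2 * l, 2 * l + 1}"
    using ready_layer[OF l] H by simp
  then have "length asg = 2" using ga unfolding greedy_assignment_def by simp
  then obtain x y where xy: "asg = [x, y]"
    by (metis (no_types, opaque_lifting) One_nat_def Suc_1 length_0_conv length_Suc_conv)
  have sxy: "snd x \<in> {2 * l, 2 * l + 1}" "snd y \<in> {2 * l, 2 * l + 1}" "snd x \<noteq> snd y"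
    using greedy_assignment_goals_ready[OF ga] greedy_assignment_distinct_goals[OF ga] rd xy
    by auto
  have fxy: "fst x \<noteq> fst y" "fst x < 2" "fst y < 2"
    using ga xy unfolding greedy_assignment_def by auto
  show ?thesis
  proof (cases "snd x = 2 * l")
    case True
    then have "snd y = 2 * l + 1" using sxy by auto
    then have "set ps = {(fst x, 2 * l), (fst y, 2 * l + 1)}" using sa xy True
      by (metis list.set(1) list.set(2) prod.collapse)
    then show ?thesis using that[OF ps(1)] fxy by blast
  next
    case False
    then have "snd x = 2 * l + 1" "snd y = 2 * l" using sxy by auto
    then have "set ps = {(fst y, 2 * l), (fst x, 2 * l + 1)}" using sa xy
      by (metis insert_commute list.set(1) list.set(2) prod.collapse)
    then show ?thesis using that[OF ps(1)] fxy by metis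
  qed
qed

lemma computed_after_layer_step:
  assumes l: "l < M" and H: "computed ms (layer_time l) = {..<2 * l}"
  shows "computed ms (Suc (layer_time l)) = {..<2 * l + 2}"
proof -
  obtain ps a b where "ms ! layer_time l = Compute ps" "set ps = {(a, 2 * l), (b, 2 * l + 1)}"
    using layer_step[OF l H] by metis
  then have "{v. \<exists>ps j. ms ! layer_time l = Compute ps \<and> (j, v) \<in> set ps} = {2 * l, 2 * l + 1}"
    by auto
  then have "computed ms (Suc (layer_time l)) = {..<2 * l} \<union> {2 * l, 2 * l + 1}"
    using computed_Suc[of ms "layer_time l"] layer_time_less_length[OF l] H by simp
  also have "\<dots> = {..<2 * l + 2}" by auto
  finally show ?thesis .
qed

lemma computed_at_layer_time: "l < M \<Longrightarrow> computed ms (layer_time l) = {..<2 * l}"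
proof (induction l)
  case 0
  then show ?case using computed_before_layer_time[of 0] by simp
next
  case (Suc l)
  then have l: "l < M" by simp
  have "Suc (layer_time l) \<le> layer_time (Suc l)"
    using layer_time_less_Suc Suc.prems by (simp add: Suc_leI)
  then have "{..<2 * l + 2} \<subseteq> computed ms (layer_time (Suc l))"
    using computed_mono[of "Suc (layer_time l)" "layer_time (Suc l)" ms]
      computed_after_layer_step[OF l Suc.IH[OF l]] by simp
  moreover have "computed ms (layer_time (Suc l)) \<subseteq> {..<2 * l + 2}"
    using computed_before_layer_time[OF Suc.prems] by simp
  ultimately show ?case by simp
qed

lemma layer_compute_step:
  assumes "l < M"
  obtains ps a b where "ms ! layer_time l = Compute ps"
    "set ps = {(a, 2 * l), (b, 2 * l + 1)}" "a \<noteq> b" "a < 2" "b < 2"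
  by (rule layer_step[OF assms computed_at_layer_time[OF assms]])

lemma layer_goal_of_processor:
  assumes "l < M" "q < 2"
  obtains ps w where "ms ! layer_time l = Compute ps" "(q, w) \<in> set ps" "w div 2 = l"
proof -
  obtain ps a b where ps: "ms ! layer_time l = Compute ps" "set ps = {(a, 2 * l), (b, 2 * l + 1)}"
    and ab: "a \<noteq> b" "a < 2" "b < 2"
    by (rule layer_compute_step[OF assms(1)])
  show ?thesis
  proof (cases "q = a")
    case True
    then show ?thesis using that[OF ps(1), of "2 * l"] ps(2) by simp
  next
    case False
    then have "q = b" using ab assms(2) by linarith
    then show ?thesis using that[OF ps(1), of "2 * l + 1"] ps(2) by simp
  qed
qed

text \<open>If the goal of processor \<open>a\<close> in layer \<open>l\<close> needs both nodes of layer \<open>l - 1\<close>, one of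
  them was computed by the other processor and has to reach \<open>a\<close> through slow memory.\<close>

lemma save_and_load_between_layers:
  assumes l: "1 \<le> l" "l < M" and both: "{2 * l - 2, 2 * l - 1} \<subseteq> inn (2 * l)"
  shows "\<exists>t0 t1. layer_time (l - 1) < t0 \<and> t0 < t1 \<and> t1 < layer_time l \<and>
           (\<exists>ps. ms ! t0 = Save ps) \<and> (\<exists>ps. ms ! t1 = Load ps)"
proof -
  let ?t = "layer_time (l - 1)" and ?T = "layer_time l"
  have l1: "l - 1 < M" using l by simp
  have tT: "?t < ?T" using layer_time_strict_mono[of "l - 1" l] l by simp
  have t: "?t < length ms" and T: "?T < length ms"
    using layer_time_less_length l1 l by auto
  have e: "2 * (l - 1) = 2 * l - 2" "2 * (l - 1) + 1 = 2 * l - 1" using l by auto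
  obtain ps' a' b' where ps': "ms ! ?t = Compute ps'" "set ps' = {(a', 2 * l - 2), (b', 2 * l - 1)}"
    "a' \<noteq> b'"
    using layer_compute_step[OF l1] e by metis
  obtain ps a b where ps: "ms ! ?T = Compute ps" "set ps = {(a, 2 * l), (b, 2 * l + 1)}"
    using layer_compute_step[OF l(2)] by metis
  obtain p u where pu: "(p, u) \<in> set ps'" "p \<noteq> a" "u \<in> {2 * l - 2, 2 * l - 1}"
    using ps'(2,3) by (cases "a' = a") auto
  have u_new: "u \<notin> computed ms ?t" and "(a, u) \<notin> set ps'"
    using computed_at_layer_time[OF l1] pu ps'(2) e l by auto
  have "u \<notin> fst (config_at ms (Suc ?t)) a"
    using red_pebbles_computed[OF pebbling, of ?t a] t u_new \<open>(a, u) \<notin> set ps'\<close> ps'(1)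
    by (auto simp: config_at_Suc apply_move_Compute)
  moreover have "u \<notin> snd (config_at ms (Suc ?t))"
    using blue_pebbles_computed[OF pebbling, of ?t] t u_new ps'(1)
    by (auto simp: config_at_Suc apply_move_Compute)
  moreover have "u \<in> computed_by ms (Suc ?t) p"
    using pu(1) ps'(1) t by (simp add: computed_by_Suc)
  moreover have "u \<in> fst (config_at ms ?T) a"
    using compute_step_ok[OF pebbling T ps(1), of a "2 * l"] ps(2) both pu(3) in_nbrs_edges l
    by auto
  ultimately show ?thesis
    using greedy_foreign_node_saved_and_loaded[OF greedy, of "Suc ?t" ?T u p a] tT T pu(2)
    by (fastforce simp: Suc_le_eq)
qed

end

lemma sum_consecutive_windows_ge:
  fixes c :: "nat \<Rightarrow> real" and T :: "nat \<Rightarrow> nat"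
  assumes mono: "\<And>l. l0 \<le> l \<Longrightarrow> l < m \<Longrightarrow> T l < T (Suc l)"
    and window: "\<And>l. l0 < l \<Longrightarrow> l \<le> m \<Longrightarrow> (\<Sum>t = Suc (T (l - 1))..<Suc (T l). c t) \<ge> A"
    and "l0 \<le> m"
  shows "(\<Sum>t = Suc (T l0)..<Suc (T m). c t) \<ge> real (m - l0) * A"
  using \<open>l0 \<le> m\<close> mono window
proof (induction m)
  case (Suc m)
  show ?case
  proof (cases "l0 = Suc m")
    case False
    then have m: "l0 \<le> m" using Suc.prems by simp
    have "T l0 \<le> T n" if "l0 \<le> n" "n \<le> m" for n
      using that
    proof (induction n rule: dec_induct)
      case (step n)
      then show ?case using Suc.prems(2)[of n] by simp
    qed simp
    then have "(\<Sum>t = Suc (T l0)..<Suc (T (Suc m)). c t) =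
        (\<Sum>t = Suc (T l0)..<Suc (T m). c t) + (\<Sum>t = Suc (T m)..<Suc (T (Suc m)). c t)"
      using Suc.prems(2)[of m] m by (intro sum.atLeastLessThan_concat[symmetric]) auto
    moreover have "(\<Sum>t = Suc (T l0)..<Suc (T m). c t) \<ge> real (m - l0) * A"
      using Suc.IH[OF m] Suc.prems by simp
    moreover have "(\<Sum>t = Suc (T m)..<Suc (T (Suc m)). c t) \<ge> A"
      using Suc.prems(3)[of "Suc m"] m by simp
    moreover have "real (Suc m - l0) * A = real (m - l0) * A + A"
      using m by (simp add: Suc_diff_le algebra_simps)
    ultimately show ?thesis by linarith
  qed simp
qed simp

lemma sum_ge_by_injective_charging:
  fixes c :: "nat \<Rightarrow> real"
  assumes "finite S" and nonneg: "\<And>t. c t \<ge> 0"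
    and charged: "\<And>s. s \<in> S \<Longrightarrow> \<exists>t. a \<le> t \<and> t < b \<and> P s t"
    and inj: "\<And>s s' t. s \<in> S \<Longrightarrow> s' \<in> S \<Longrightarrow> P s t \<Longrightarrow> P s' t \<Longrightarrow> s = s'"
    and pays: "\<And>s t. s \<in> S \<Longrightarrow> P s t \<Longrightarrow> f s \<le> c t"
  shows "(\<Sum>s\<in>S. f s) \<le> (\<Sum>t = a..<b. c t)"
proof -
  define \<tau> where "\<tau> s = (SOME t. a \<le> t \<and> t < b \<and> P s t)" for s
  have \<tau>: "a \<le> \<tau> s \<and> \<tau> s < b \<and> P s (\<tau> s)" if "s \<in> S" for s
    unfolding \<tau>_def by (rule someI_ex) (use charged that in blast)
  have "inj_on \<tau> S"
    by (rule inj_onI) (use \<tau> inj in metis)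
  have "(\<Sum>s\<in>S. f s) \<le> (\<Sum>s\<in>S. c (\<tau> s))" using pays \<tau> by (intro sum_mono) blast
  also have "\<dots> = (\<Sum>t\<in>\<tau> ` S. c t)" using \<open>inj_on \<tau> S\<close> by (simp add: sum.reindex)
  also have "\<dots> \<le> (\<Sum>t = a..<b. c t)" using \<tau> nonneg by (intro sum_mono2) auto
  finally show ?thesis .
qed

subsection \<open>The complete ladder\<close>

definition ladder_inn :: "nat \<Rightarrow> nat set" where
  "ladder_inn v = (if v < 2 then {} else {2 * (v div 2) - 2, 2 * (v div 2) - 1})"

interpretation ladder: layered_dag M ladder_inn for M
proof
  fix u v
  assume "u \<in> ladder_inn v"
  then show "u div 2 < v div 2" unfolding ladder_inn_def by (auto split: if_splits)
next
  fix v :: nat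
  assume "2 \<le> v"
  then show "\<exists>u\<in>ladder_inn v. u div 2 = v div 2 - 1"
    unfolding ladder_inn_def by (intro bexI[of _ "2 * (v div 2) - 2"]) auto
qed

definition sequential_schedule :: "nat \<Rightarrow> nat move list" where
  "sequential_schedule M = map (\<lambda>v. Compute [(0, v)]) [0..<2 * M]"

lemma config_at_sequential_schedule:
  "t \<le> 2 * M \<Longrightarrow> config_at (sequential_schedule M) t = ((\<lambda>j. if j = 0 then {..<t} else {}), {})"
proof (induction t)
  case 0
  then show ?case by (simp add: init_config_def fun_eq_iff)
next
  case (Suc t)
  then have "t < length (sequential_schedule M)" "sequential_schedule M ! t = Compute [(0, t)]"
    by (simp_all add: sequential_schedule_def)
  with Suc show ?case by (auto simp: config_at_Suc fun_eq_iff)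
qed

lemma sequential_schedule_pebbling:
  assumes "2 * M \<le> r"
  shows "pebbling_strategy (ladder.nodes M) (ladder.edges M) 2 r (sequential_schedule M)"
proof (rule pebbling_strategyI)
  fix t
  assume "t < length (sequential_schedule M)"
  then show "move_ok (ladder.nodes M) (ladder.edges M) 2 (sequential_schedule M ! t)
      (config_at (sequential_schedule M) t)"
    using config_at_sequential_schedule[of t M] ladder.in_nbrs_edges[of M t] ladder.inn_less[of _ t]
    by (auto simp: sequential_schedule_def multi_ok_def ladder.nodes_def)
next
  fix t
  assume "t \<le> length (sequential_schedule M)"
  then show "valid_config 2 r (config_at (sequential_schedule M) t)"
    using config_at_sequential_schedule[of t M] assms
    by (auto simp: valid_config_def sequential_schedule_def)
next
  show "terminal_config (ladder.nodes M) (ladder.edges M) 2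
      (config_at (sequential_schedule M) (length (sequential_schedule M)))"
    using config_at_sequential_schedule[of "2 * M" M]
    unfolding terminal_config_def is_sink_def ladder.nodes_def
    by (auto simp: sequential_schedule_def)
qed

lemma strategy_cost_sequential_schedule: "strategy_cost g (sequential_schedule M) = 2 * M"
  unfolding strategy_cost_def sequential_schedule_def by (simp add: comp_def sum_list_triv)

lemma greedy_cost_ladder:
  assumes g: "greedy_strategy rl (ladder.nodes M) (ladder.edges M) 2 r ms" and M: "1 \<le> M"
  shows "real (strategy_cost g ms) \<ge> real (M - 1) * (2 * real g + 1)"
proof -
  interpret layered_greedy M ladder_inn rl r ms
    by unfold_locales (rule g)
  let ?c = "\<lambda>t. real (move_cost g (ms ! t))"
  have window: "(\<Sum>t = Suc (layer_time (l - 1))..<Suc (layer_time l). ?c t) \<ge> 2 * real g + 1"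
    if l: "1 \<le> l" "l < M" for l
  proof -
    have "{2 * l - 2, 2 * l - 1} \<subseteq> ladder_inn (2 * l)" using l by (auto simp: ladder_inn_def)
    then obtain t0 t1 ps0 ps1 where t: "layer_time (l - 1) < t0" "t0 < t1" "t1 < layer_time l"
      "ms ! t0 = Save ps0" "ms ! t1 = Load ps1"
      using save_and_load_between_layers[OF l] by blast
    obtain ps where "ms ! layer_time l = Compute ps"
      using layer_compute_step[OF l(2)] by metis
    then have "2 * real g + 1 = ?c t0 + ?c t1 + ?c (layer_time l)" using t by simp
    also have "\<dots> = (\<Sum>t \<in> {t0, t1, layer_time l}. ?c t)" using t by simp
    also have "\<dots> \<le> (\<Sum>t = Suc (layer_time (l - 1))..<Suc (layer_time l). ?c t)"
      using t by (intro sum_mono2) auto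
    finally show ?thesis by simp
  qed
  have "real (M - 1 - 0) * (2 * real g + 1)
      \<le> (\<Sum>t = Suc (layer_time 0)..<Suc (layer_time (M - 1)). ?c t)"
    by (rule sum_consecutive_windows_ge) (use layer_time_less_Suc window in auto)
  also have "\<dots> \<le> (\<Sum>t = 0..<length ms. ?c t)"
    using layer_time_less_length[of "M - 1"] M by (intro sum_mono2) auto
  finally show ?thesis by (simp add: strategy_cost_eq_sum)
qed

lemma ladder_ratio_arith:
  fixes g M :: real
  assumes "g \<ge> 2" "M \<ge> 6 * g + 3"
  shows "(1 + 2 / 3 * g) * (2 * M) \<le> (M - 1) * (2 * g + 1)"
proof -
  have "(6 * g + 3) * (2 / 3 * g - 1) - (2 * g + 1) = 2 * (2 * g + 1) * (g - 2)"
    by (simp add: algebra_simps)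
  also have "\<dots> \<ge> 0" using assms by simp
  finally have "2 * g + 1 \<le> (6 * g + 3) * (2 / 3 * g - 1)" by simp
  also have "\<dots> \<le> M * (2 / 3 * g - 1)"
    using assms by (intro mult_right_mono) simp_all
  finally show ?thesis by (simp add: algebra_simps)
qed

lemma greedy_ratio_ladder:
  assumes g: "g \<ge> 2" and M: "M \<ge> 6 * g + 3"
    and greedy: "greedy_strategy rl (ladder.nodes M) (ladder.edges M) 2 (2 * M) ms"
  shows "(1 + 2 / 3 * real g) * real (mpp_opt (ladder.nodes M) (ladder.edges M) 2 (2 * M) g)
    \<le> real (strategy_cost g ms)"
proof -
  have "pebbling_strategy (ladder.nodes M) (ladder.edges M) 2 (2 * M) (sequential_schedule M)"
    by (rule sequential_schedule_pebbling) simp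
  then have "mpp_opt (ladder.nodes M) (ladder.edges M) 2 (2 * M) g
      \<le> strategy_cost g (sequential_schedule M)"
    by (rule mpp_opt_le)
  then have "real (mpp_opt (ladder.nodes M) (ladder.edges M) 2 (2 * M) g) \<le> 2 * real M"
    by (simp add: strategy_cost_sequential_schedule)
  then have "(1 + 2 / 3 * real g) * real (mpp_opt (ladder.nodes M) (ladder.edges M) 2 (2 * M) g)
      \<le> (1 + 2 / 3 * real g) * (2 * real M)"
    by (rule mult_left_mono) simp
  also have "\<dots> \<le> (real M - 1) * (2 * real g + 1)"
    using g M by (intro ladder_ratio_arith) simp_all
  also have "\<dots> \<le> real (strategy_cost g ms)"
    using greedy_cost_ladder[OF greedy] M by (simp add: of_nat_diff)
  finally show ?thesis .
qed

lemma filterlim_double_shift: "filterlim (\<lambda>N :: nat. 2 * (N + c)) at_top sequentially"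
  by (rule filterlim_subseq) (simp add: strict_mono_def)

theorem greedy_ratio_io_cost:
  "\<forall>g :: nat. g \<ge> 2 \<longrightarrow>
      (\<exists>(V :: nat \<Rightarrow> nat set) (E :: nat \<Rightarrow> (nat \<times> nat) set) (r :: nat \<Rightarrow> nat).
         (\<forall>N. is_dag (V N) (E N) \<and> r N \<ge> card (V N)) \<and>
         filterlim (\<lambda>N. card (V N)) at_top sequentially \<and>
         (\<forall>\<epsilon> > 0. \<forall>\<^sub>F N in sequentially. \<forall>ms. greedy_strategy rl (V N) (E N) 2 (r N) ms \<longrightarrow>
            real (strategy_cost g ms) \<ge> (1 + 2 / 3 * real g - \<epsilon>) * real (mpp_opt (V N) (E N) 2 (r N) g)))"
proof (intro allI impI)
  fix g :: nat
  assume g: "g \<ge> 2"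
  let ?M = "\<lambda>N. N + (6 * g + 3)"
  show "\<exists>(V :: nat \<Rightarrow> nat set) (E :: nat \<Rightarrow> (nat \<times> nat) set) (r :: nat \<Rightarrow> nat).
         (\<forall>N. is_dag (V N) (E N) \<and> r N \<ge> card (V N)) \<and>
         filterlim (\<lambda>N. card (V N)) at_top sequentially \<and>
         (\<forall>\<epsilon> > 0. \<forall>\<^sub>F N in sequentially. \<forall>ms. greedy_strategy rl (V N) (E N) 2 (r N) ms \<longrightarrow>
            real (strategy_cost g ms) \<ge> (1 + 2 / 3 * real g - \<epsilon>) * real (mpp_opt (V N) (E N) 2 (r N) g))"
  proof (intro exI[of _ "\<lambda>N. ladder.nodes (?M N)"] exI[of _ "\<lambda>N. ladder.edges (?M N)"]
      exI[of _ "\<lambda>N. 2 * ?M N"] conjI allI impI always_eventually)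
    fix N
    show "is_dag (ladder.nodes (?M N)) (ladder.edges (?M N))" by (rule ladder.is_dag)
    show "card (ladder.nodes (?M N)) \<le> 2 * ?M N" by (simp add: ladder.card_nodes)
  next
    show "filterlim (\<lambda>N. card (ladder.nodes (?M N))) at_top sequentially"
      unfolding ladder.card_nodes by (rule filterlim_double_shift)
  next
    fix \<epsilon> :: real and N ms
    assume "\<epsilon> > 0" and greedy: "greedy_strategy rl (ladder.nodes (?M N)) (ladder.edges (?M N)) 2 (2 * ?M N) ms"
    have "(1 + 2 / 3 * real g - \<epsilon>) * real (mpp_opt (ladder.nodes (?M N)) (ladder.edges (?M N)) 2 (2 * ?M N) g)
        \<le> (1 + 2 / 3 * real g) * real (mpp_opt (ladder.nodes (?M N)) (ladder.edges (?M N)) 2 (2 * ?M N) g)"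
      using \<open>\<epsilon> > 0\<close> by (intro mult_right_mono) simp_all
    also have "\<dots> \<le> real (strategy_cost g ms)"
      using greedy_ratio_ladder[OF g _ greedy] by simp
    finally show "(1 + 2 / 3 * real g - \<epsilon>) * real (mpp_opt (ladder.nodes (?M N)) (ladder.edges (?M N)) 2 (2 * ?M N) g)
        \<le> real (strategy_cost g ms)" .
  qed
qed

subsection \<open>Two chains followed by a ladder\<close>

text \<open>Layers \<open>0, \<dots>, D - 1\<close> form the even chain and the odd chain; \<open>chain D x\<close> is the chain of
  parity \<open>x\<close>. Layer \<open>D + j\<close> is rung \<open>j\<close> of the ladder; both its nodes depend on the chain of
  parity \<open>j\<close>, from rung 1 on also on the even node of rung \<open>j - 1\<close>, and from rung 2 on also on
  the odd node of rung \<open>j - 2\<close>.\<close>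

definition chain :: "nat \<Rightarrow> nat \<Rightarrow> nat set" where
  "chain D x = (\<lambda>i. 2 * i + x) ` {..<D}"

definition chain_ladder_inn :: "nat \<Rightarrow> nat \<Rightarrow> nat set" where
  "chain_ladder_inn D v =
     (if v < 2 * D then (if v < 2 then {} else {v - 2})
      else if v div 2 = D then chain D 0
      else if v div 2 = D + 1 then insert (2 * D) (chain D 1)
      else insert (2 * (v div 2) - 2) (insert (2 * (v div 2) - 3) (chain D ((v div 2 - D) mod 2))))"

lemma mem_chain_iff: "x < 2 \<Longrightarrow> v \<in> chain D x \<longleftrightarrow> v < 2 * D \<and> v mod 2 = x"
proof
  assume "x < 2" "v < 2 * D \<and> v mod 2 = x"
  then have "v = 2 * (v div 2) + x" "v div 2 < D" by auto
  then show "v \<in> chain D x" unfolding chain_def by blast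
qed (auto simp: chain_def)

lemma chain_less: "v \<in> chain D x \<Longrightarrow> x < 2 \<Longrightarrow> v < 2 * D"
  by (simp add: mem_chain_iff)

lemma finite_chain [simp]: "finite (chain D x)"
  by (simp add: chain_def)

lemma card_chain [simp]: "card (chain D x) = D"
  unfolding chain_def by (subst card_image) (auto intro: inj_onI)

lemma chain_0 [simp]: "chain 0 x = {}"
  by (simp add: chain_def)

lemma chain_Suc: "chain (Suc n) x = insert (2 * n + x) (chain n x)"
  by (simp add: chain_def lessThan_Suc)

lemma rung_inn:
  "D + 2 \<le> v div 2 \<Longrightarrow> chain_ladder_inn D v =
     insert (2 * (v div 2) - 2) (insert (2 * (v div 2) - 3) (chain D ((v div 2 - D) mod 2)))"
  unfolding chain_ladder_inn_def by auto

interpretation chain_ladder: layered_dag "D + L" "chain_ladder_inn D" for D L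
proof
  have below_chain: "u \<in> chain D x \<Longrightarrow> x < 2 \<Longrightarrow> u div 2 < D" for u x
    using chain_less[of u D x] by auto
  fix u v
  assume u: "u \<in> chain_ladder_inn D v"
  consider "v < 2 * D" | "v div 2 = D" | "v div 2 = D + 1" | "D + 2 \<le> v div 2" by linarith
  then show "u div 2 < v div 2"
  proof cases
    case 3
    then show ?thesis
      using u below_chain[of u 1] by (auto simp: chain_ladder_inn_def split: if_splits)
  next
    case 4
    then show ?thesis
      using u below_chain[of u "(v div 2 - D) mod 2"] by (auto simp: rung_inn)
  qed (use u below_chain in \<open>auto simp: chain_ladder_inn_def split: if_splits\<close>)
next
  fix v :: nat
  assume "2 \<le> v"
  consider "v < 2 * D" | "v div 2 = D" | "v div 2 = D + 1" | "D + 2 \<le> v div 2" by linarith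
  then show "\<exists>u\<in>chain_ladder_inn D v. u div 2 = v div 2 - 1"
  proof cases
    case 2
    with \<open>2 \<le> v\<close> have "2 * (D - 1) \<in> chain D 0" by (auto simp: mem_chain_iff)
    with 2 show ?thesis
      unfolding chain_ladder_inn_def by (intro bexI[of _ "2 * (D - 1)"]) auto
  next
    case 4
    then show ?thesis by (intro bexI[of _ "2 * (v div 2) - 2"]) (auto simp: rung_inn)
  qed (use \<open>2 \<le> v\<close> in \<open>auto simp: chain_ladder_inn_def\<close>)
qed

lemma card_chain_ladder_inn_le: "card (chain_ladder_inn D v) \<le> D + 2"
proof -
  have one: "card (insert a (chain D x)) \<le> D + 1" for a x
    by (simp add: card_insert_if)
  then have "card (insert a (insert b (chain D x))) \<le> D + 2" for a b x
    using one[of b x] by (simp add: card_insert_if)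
  moreover have "card (insert a (chain D x)) \<le> D + 2" for a x
    using one[of a x] by simp
  ultimately show ?thesis unfolding chain_ladder_inn_def by (simp split: if_split)
qed

lemma rung_notin_chain: "2 * D \<le> w \<Longrightarrow> x < 2 \<Longrightarrow> w \<notin> chain D x"
  using chain_less by fastforce

lemma card_rung_inn:
  assumes "D + 2 \<le> w div 2"
  shows "card (chain_ladder_inn D w) = D + 2" "card (insert w (chain_ladder_inn D w)) = D + 3"
proof -
  let ?a = "2 * (w div 2) - 2" and ?b = "2 * (w div 2) - 3" and ?x = "(w div 2 - D) mod 2"
  have "?a \<notin> chain D ?x" "?b \<notin> chain D ?x" "w \<notin> chain D ?x"
    by (intro rung_notin_chain; use assms in simp)+
  moreover have "?a \<noteq> ?b" "w \<noteq> ?a" "w \<noteq> ?b" using assms by auto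
  ultimately show "card (chain_ladder_inn D w) = D + 2" "card (insert w (chain_ladder_inn D w)) = D + 3"
    using assms by (auto simp: rung_inn)
qed

lemma max_indeg_chain_ladder:
  assumes "3 \<le> L"
  shows "max_indeg (chain_ladder.nodes D L) (chain_ladder.edges D L) = D + 2"
  unfolding max_indeg_def
proof (rule Max_eqI)
  let ?w = "2 * (D + 2)"
  show "finite ((\<lambda>v. card (in_nbrs (chain_ladder.edges D L) v)) ` chain_ladder.nodes D L)"
    by (simp add: chain_ladder.nodes_def)
  show "y \<le> D + 2" if "y \<in> (\<lambda>v. card (in_nbrs (chain_ladder.edges D L) v)) ` chain_ladder.nodes D L" for y
    using that card_chain_ladder_inn_le chain_ladder.in_nbrs_edges by auto
  have "card (in_nbrs (chain_ladder.edges D L) ?w) = D + 2"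
    using card_rung_inn(1)[of D ?w] chain_ladder.in_nbrs_edges[of D L ?w] assms by simp
  moreover have "?w \<in> chain_ladder.nodes D L" using assms by (simp add: chain_ladder.nodes_def)
  ultimately show "D + 2 \<in> (\<lambda>v. card (in_nbrs (chain_ladder.edges D L) v)) ` chain_ladder.nodes D L"
    by (metis image_eqI)
qed

locale chain_ladder_greedy = layered_greedy "D + L" "chain_ladder_inn D" rl "D + 3" ms
  for D L :: nat and rl ms
begin

lemma in_nbrs_rung:
  "D + 2 \<le> w div 2 \<Longrightarrow> w div 2 < D + L \<Longrightarrow> in_nbrs edges w =
     insert (2 * (w div 2) - 2) (insert (2 * (w div 2) - 3) (chain D ((w div 2 - D) mod 2)))"
  using in_nbrs_edges[of w] rung_inn[of D w] by simp

text \<open>Right after rung \<open>j - 1\<close>, the fast memory of either processor is filled up by the goal it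
  has just computed and that goal's in-neighbours, among which the chain of parity \<open>j - 1\<close>.\<close>

lemma chain_not_red_after_previous_rung:
  assumes j: "3 \<le> j" "j < L" and q: "q < 2" and s: "s \<in> chain D (j mod 2)"
  shows "s \<notin> fst (config_at ms (Suc (layer_time (D + j - 1)))) q"
proof -
  let ?t = "layer_time (D + j - 1)" and ?R = "fst (config_at ms (Suc (layer_time (D + j - 1)))) q"
  have "D + j - 1 < D + L" using j by simp
  then obtain ps w where w: "ms ! ?t = Compute ps" "(q, w) \<in> set ps" "w div 2 = D + j - 1"
    by (rule layer_goal_of_processor[OF _ q])
  have t: "?t < length ms" using layer_time_less_length[of "D + j - 1"] j by simp
  have rung: "D + 2 \<le> w div 2" "w div 2 < D + L" using w(3) j by auto
  have "in_nbrs edges w \<subseteq> fst (config_at ms ?t) q" by (rule compute_step_ok[OF pebbling t w(1,2)])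
  then have sub: "insert w (in_nbrs edges w) \<subseteq> ?R"
    using w(1,2) t by (auto simp: config_at_Suc apply_move_Compute)
  have "finite ?R"
    using red_pebbles_computed[OF pebbling, of "Suc ?t" q] computed_subset_nodes[OF pebbling, of "Suc ?t"]
      t finite_subset[of _ nodes] by (auto simp: nodes_def)
  moreover have "card ?R \<le> D + 3"
    using pebbling_strategy_valid[OF pebbling, of "Suc ?t"] t q by (simp add: valid_config_def)
  moreover have "card (insert w (in_nbrs edges w)) = D + 3"
    using card_rung_inn(2)[OF rung(1)] in_nbrs_edges[of w] rung by (simp add: nodes_def)
  ultimately have R: "?R = insert w (in_nbrs edges w)"
    using sub by (metis card_seteq)
  have "s < 2 * D" "s mod 2 = j mod 2" using s mem_chain_iff[of "j mod 2" s D] by auto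
  moreover have "(w div 2 - D) mod 2 \<noteq> j mod 2"
  proof -
    have "w div 2 - D = j - 1" using w(3) j by simp
    moreover have "(j - 1) mod 2 \<noteq> j mod 2" using j(1) by (cases j) (simp_all add: mod_Suc)
    ultimately show ?thesis by simp
  qed
  ultimately have "s \<notin> chain D ((w div 2 - D) mod 2)"
    using mem_chain_iff[of "(w div 2 - D) mod 2" s D] by simp
  moreover have "s \<noteq> w" "s \<noteq> 2 * (w div 2) - 2" "s \<noteq> 2 * (w div 2) - 3"
    using \<open>s < 2 * D\<close> rung by auto
  ultimately show ?thesis using R in_nbrs_rung[OF rung] by auto
qed

lemma chain_red_at_rung:
  assumes j: "2 \<le> j" "j < L" and q: "q < 2"
  shows "chain D (j mod 2) \<subseteq> fst (config_at ms (layer_time (D + j))) q"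
proof -
  have "D + j < D + L" using j by simp
  then obtain ps w where w: "ms ! layer_time (D + j) = Compute ps" "(q, w) \<in> set ps" "w div 2 = D + j"
    by (rule layer_goal_of_processor[OF _ q])
  have "chain D (j mod 2) \<subseteq> in_nbrs edges w" using in_nbrs_rung[of w] w(3) j by auto
  also have "\<dots> \<subseteq> fst (config_at ms (layer_time (D + j))) q"
    using compute_step_ok[OF pebbling _ w(1,2)] layer_time_less_length[of "D + j"] j by simp
  finally show ?thesis .
qed

lemma chain_recomputed_by_owner:
  assumes j: "3 \<le> j" "j < L" and s: "s \<in> chain D x" "x < 2"
    and t: "layer_time (D + j - 1) \<le> t" "t < length ms"
    and ps: "ms ! t = Compute ps" "(q, s) \<in> set ps"
  shows "s \<in> computed_by ms (length ms) q"
proof -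
  have "s < 2 * D" using chain_less[OF s] .
  then have "s \<in> computed ms (layer_time (D + j - 1))"
    using computed_at_layer_time[of "D + j - 1"] j by auto
  then have "s \<in> computed ms t" using computed_mono[OF t(1), of ms] by auto
  then have "s \<in> computed_by ms t q" by (rule greedy_recomputes_own_node[OF greedy t(2) ps])
  then show ?thesis using computed_by_mono[of t "length ms" ms q] t(2) by auto
qed

text \<open>Processor \<open>q\<close> has to bring the chain of parity \<open>j\<close> back into its fast memory between rungs
  \<open>j - 1\<close> and \<open>j\<close>: a chain node it has computed itself costs at least a recomputation, any
  other chain node a load.\<close>

lemma processor_reloads_chain:
  assumes j: "3 \<le> j" "j < L" and q: "q < 2" and g: "1 \<le> g"
  shows "(\<Sum>s\<in>chain D (j mod 2). if s \<in> computed_by ms (length ms) q then 1 else real g)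
    \<le> (\<Sum>t = Suc (layer_time (D + j - 1))..<layer_time (D + j). real (move_cost g (ms ! t)))"
proof -
  let ?t = "layer_time (D + j - 1)" and ?T = "layer_time (D + j)"
  let ?P = "\<lambda>s t. t < length ms \<and> Suc ?t \<le> t \<and>
    (\<exists>ps. (ms ! t = Load ps \<or> ms ! t = Compute ps) \<and> (q, s) \<in> set ps)"
  have tT: "?t < ?T" using layer_time_strict_mono[of "D + j - 1" "D + j"] j by simp
  have T: "?T < length ms" using layer_time_less_length[of "D + j"] j by simp
  show ?thesis
  proof (rule sum_ge_by_injective_charging[where P = ?P])
    fix s
    assume "s \<in> chain D (j mod 2)"
    then show "\<exists>t. Suc ?t \<le> t \<and> t < ?T \<and> ?P s t"
      using red_pebble_acquired[of "Suc ?t" ?T ms s q] chain_not_red_after_previous_rung[OF j q]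
        chain_red_at_rung[of j q] j q tT T by fastforce
  next
    fix s s' t
    assume "?P s t" "?P s' t"
    then obtain ps where "t < length ms" "ms ! t = Load ps \<or> ms ! t = Compute ps"
      "(q, s) \<in> set ps" "(q, s') \<in> set ps"
      by auto
    then show "s = s'"
      using load_or_compute_distinct_processors[OF pebbling] by (metis eq_key_imp_eq_value)
  next
    fix s t
    assume s: "s \<in> chain D (j mod 2)" and "?P s t"
    then obtain ps where t: "t < length ms" "Suc ?t \<le> t"
      and ps: "ms ! t = Load ps \<or> ms ! t = Compute ps" "(q, s) \<in> set ps"
      by auto
    show "(if s \<in> computed_by ms (length ms) q then 1 else real g) \<le> real (move_cost g (ms ! t))"
    proof (cases "ms ! t = Compute ps")
      case True
      then show ?thesis
        using chain_recomputed_by_owner[OF j s _ _ t(1) True ps(2)] t(2) by simp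
    qed (use ps g in auto)
  qed simp_all
qed

lemma rung_window_cost:
  assumes j: "3 \<le> j" "j < L" and g: "1 \<le> g"
  shows "real D * (real g + 1) / 2 + 1
    \<le> (\<Sum>t = Suc (layer_time (D + j - 1))..<Suc (layer_time (D + j)). real (move_cost g (ms ! t)))"
proof -
  let ?c = "\<lambda>t. real (move_cost g (ms ! t))"
  let ?f = "\<lambda>q s. if s \<in> computed_by ms (length ms) q then 1 else real g"
  let ?W = "\<Sum>t = Suc (layer_time (D + j - 1))..<layer_time (D + j). ?c t"
  have "real D * (real g + 1) = (\<Sum>s\<in>chain D (j mod 2). real g + 1)" by simp
  also have "\<dots> \<le> (\<Sum>s\<in>chain D (j mod 2). ?f 0 s + ?f 1 s)"
    using greedy_computed_by_unique[OF greedy, of _ "length ms" 0 1] g by (intro sum_mono) auto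
  also have "\<dots> \<le> 2 * ?W"
    using processor_reloads_chain[OF j _ g, of 0] processor_reloads_chain[OF j _ g, of 1]
    by (simp add: sum.distrib)
  finally have "real D * (real g + 1) / 2 \<le> ?W" by simp
  moreover obtain ps where "ms ! layer_time (D + j) = Compute ps"
    using layer_compute_step[of "D + j"] j by auto
  moreover have "layer_time (D + j - 1) < layer_time (D + j)"
    using layer_time_strict_mono[of "D + j - 1" "D + j"] j by simp
  ultimately show ?thesis by simp
qed

lemma greedy_cost_chain_ladder:
  assumes L: "3 \<le> L" and g: "1 \<le> g"
  shows "real (L - 3) * (real D * (real g + 1) / 2 + 1) \<le> real (strategy_cost g ms)"
proof -
  let ?c = "\<lambda>t. real (move_cost g (ms ! t))"
  have "real (D + L - 1 - (D + 2)) * (real D * (real g + 1) / 2 + 1)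
      \<le> (\<Sum>t = Suc (layer_time (D + 2))..<Suc (layer_time (D + L - 1)). ?c t)"
  proof (rule sum_consecutive_windows_ge)
    fix l
    assume "D + 2 < l" "l \<le> D + L - 1"
    then show "real D * (real g + 1) / 2 + 1 \<le> (\<Sum>t = Suc (layer_time (l - 1))..<Suc (layer_time l). ?c t)"
      using rung_window_cost[of "l - D" g] g by simp
  qed (use layer_time_less_Suc L in auto)
  also have "\<dots> \<le> (\<Sum>t = 0..<length ms. ?c t)"
    using layer_time_less_length[of "D + L - 1"] L by (intro sum_mono2) auto
  finally show ?thesis by (simp add: strategy_cost_eq_sum)
qed

end

subsection \<open>An alternating schedule for the chain ladder\<close>

fun valid_run :: "'v set \<Rightarrow> ('v \<times> 'v) set \<Rightarrow> nat \<Rightarrow> nat \<Rightarrow> 'v config \<Rightarrow> 'v move list \<Rightarrow> bool" where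
  "valid_run V E k r C [] = valid_config k r C"
| "valid_run V E k r C (m # ms) =
     (valid_config k r C \<and> move_ok V E k m C \<and> valid_run V E k r (apply_move m C) ms)"

lemma valid_run_append:
  "valid_run V E k r C (xs @ ys) \<longleftrightarrow> valid_run V E k r C xs \<and> valid_run V E k r (fold apply_move xs C) ys"
  by (induction xs arbitrary: C) (auto elim: valid_run.elims)

lemma valid_run_trace:
  "valid_run V E k r C ms \<Longrightarrow>
     (\<forall>i<length ms. move_ok V E k (ms ! i) (trace C ms ! i)) \<and>
     (\<forall>C'\<in>set (trace C ms). valid_config k r C') \<and> last (trace C ms) = fold apply_move ms C"
proof (induction ms arbitrary: C)
  case (Cons m ms)
  then have IH: "(\<forall>i<length ms. move_ok V E k (ms ! i) (trace (apply_move m C) ms ! i)) \<and>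
      (\<forall>C'\<in>set (trace (apply_move m C) ms). valid_config k r C') \<and>
      last (trace (apply_move m C) ms) = fold apply_move ms (apply_move m C)"
    using Cons.IH[of "apply_move m C"] Cons.prems by simp
  have "move_ok V E k ((m # ms) ! i) (trace C (m # ms) ! i)" if "i < length (m # ms)" for i
    using that IH Cons.prems by (cases i) auto
  then show ?case using IH Cons.prems by auto
qed simp

lemma pebbling_strategy_of_valid_run:
  "valid_run V E k r init_config ms \<Longrightarrow> terminal_config V E k (fold apply_move ms init_config) \<Longrightarrow>
     pebbling_strategy V E k r ms"
  unfolding pebbling_strategy_def using valid_run_trace by metis

definition config2 :: "nat \<Rightarrow> 'v set \<Rightarrow> 'v set \<Rightarrow> 'v set \<Rightarrow> 'v config" where
  "config2 x X Y B = ((\<lambda>i. if i = x then X else if i = 1 - x then Y else {}), B)"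

lemma init_config2: "init_config = config2 0 {} {} {}"
  unfolding config2_def init_config_def by (auto simp: fun_eq_iff)

lemma config2_swap: "x < 2 \<Longrightarrow> config2 x X Y B = config2 (1 - x) Y X B"
  unfolding config2_def by (cases "x = 0") (auto simp: fun_eq_iff)

lemma config2_valid: "x < 2 \<Longrightarrow> valid_config 2 r (config2 x X Y B) \<longleftrightarrow> card X \<le> r \<and> card Y \<le> r"
  unfolding config2_def valid_config_def by (auto simp: less_2_cases_iff)

lemma config2_pebbled:
  "x < 2 \<Longrightarrow> snd (config2 x X Y B) \<union> (\<Union>j<2. fst (config2 x X Y B) j) = B \<union> X \<union> Y"
  unfolding config2_def by (auto simp: less_2_cases_iff)

lemma config2_moves:
  assumes "x < 2"
  shows "apply_move (Compute [(x, v)]) (config2 x X Y B) = config2 x (insert v X) Y B"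
    and "apply_move (Load [(x, v)]) (config2 x X Y B) = config2 x (insert v X) Y B"
    and "apply_move (Save [(x, v)]) (config2 x X Y B) = config2 x X Y (insert v B)"
    and "apply_move (DelRed x v) (config2 x X Y B) = config2 x (X - {v}) Y B"
  using assms unfolding config2_def by (auto simp: fun_eq_iff)

lemma config2_moves_ok:
  assumes "x < 2"
  shows "move_ok V E 2 (Compute [(x, v)]) (config2 x X Y B) \<longleftrightarrow> v \<in> V \<and> in_nbrs E v \<subseteq> X"
    and "move_ok V E 2 (Load [(x, v)]) (config2 x X Y B) \<longleftrightarrow> v \<in> B"
    and "move_ok V E 2 (Save [(x, v)]) (config2 x X Y B) \<longleftrightarrow> v \<in> X"
    and "move_ok V E 2 (DelRed x v) (config2 x X Y B) \<longleftrightarrow> v \<in> X"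
  using assms unfolding config2_def by (auto simp: multi_ok_def)

lemma config2_compute_both:
  "apply_move (Compute [(0, a), (1, b)]) (config2 0 X Y B) = config2 0 (insert a X) (insert b Y) B"
  unfolding config2_def by (auto simp: fun_eq_iff)

lemma config2_compute_both_ok:
  "move_ok V E 2 (Compute [(0, a), (1, b)]) (config2 0 X Y B) \<longleftrightarrow>
     a \<in> V \<and> in_nbrs E a \<subseteq> X \<and> b \<in> V \<and> in_nbrs E b \<subseteq> Y"
  unfolding config2_def by (auto simp: multi_ok_def)

lemma valid_run_rung_pattern:
  assumes x: "x < 2"
    and nbrs: "in_nbrs E u = insert a (insert b S)" "in_nbrs E w = insert a (insert b S)"
    and V: "u \<in> V" "w \<in> V" and a: "a \<in> B"
    and fresh: "a \<notin> S" "b \<notin> S" "u \<notin> S" "w \<notin> S" "distinct [a, b, u, w]"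
    and card: "finite S" "card S + 3 \<le> r" "card Y \<le> r"
  defines "ms \<equiv> [Load [(x, a)], Compute [(x, u)], Save [(x, u)], DelRed x u,
    Compute [(x, w)], DelRed x a, DelRed x b]"
  shows "valid_run V E 2 r (config2 x (insert b S) Y B) ms"
    and "fold apply_move ms (config2 x (insert b S) Y B) = config2 x (insert w S) Y (insert u B)"
proof -
  have "insert u (insert a (insert b S)) - {u} = insert a (insert b S)"
    "insert w (insert a (insert b S)) - {a} = insert w (insert b S)"
    "insert w (insert b S) - {b} = insert w S"
    using fresh by auto
  moreover have "card (insert c (insert d (insert e S))) \<le> r" for c d e
    using card by (simp add: card_insert_if)
  moreover have "card (insert c (insert d S)) \<le> r" "card (insert c S) \<le> r" for c d
    using card by (simp_all add: card_insert_if)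
  ultimately show "valid_run V E 2 r (config2 x (insert b S) Y B) ms"
    "fold apply_move ms (config2 x (insert b S) Y B) = config2 x (insert w S) Y (insert u B)"
    unfolding ms_def using x nbrs V a card by (simp_all add: config2_moves config2_moves_ok config2_valid)
qed

definition rung_left :: "nat \<Rightarrow> nat \<Rightarrow> nat" where
  "rung_left D j = 2 * (D + j)"

definition rung_right :: "nat \<Rightarrow> nat \<Rightarrow> nat" where
  "rung_right D j = 2 * (D + j) + 1"

lemma in_nbrs_chain_node:
  assumes "v < 2 * D"
  shows "in_nbrs (chain_ladder.edges D L) v \<subseteq> chain (v div 2) (v mod 2)"
proof -
  have "v - 2 \<in> chain (v div 2) (v mod 2)" if "2 \<le> v"
  proof -
    have "v div 2 * 2 + v mod 2 = v" "v mod 2 < 2" by simp_all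
    then have "v - 2 = 2 * (v div 2 - 1) + v mod 2" "v div 2 - 1 < v div 2" using that by linarith+
    then show ?thesis unfolding chain_def by blast
  qed
  moreover have "in_nbrs (chain_ladder.edges D L) v = (if v < 2 then {} else {v - 2})"
    using assms chain_ladder.in_nbrs_edges[of D L v] by (simp add: chain_ladder_inn_def)
  ultimately show ?thesis by simp
qed

lemma in_nbrs_rung_node:
  assumes "2 \<le> j" "j < L" "v \<in> {rung_left D j, rung_right D j}"
  shows "in_nbrs (chain_ladder.edges D L) v =
    insert (rung_left D (j - 1)) (insert (rung_right D (j - 2)) (chain D (j mod 2)))"
proof -
  have "v div 2 = D + j" using assms(3) by (auto simp: rung_left_def rung_right_def)
  moreover have "2 * (D + j) - 2 = rung_left D (j - 1)" "2 * (D + j) - 3 = rung_right D (j - 2)"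
    using assms(1) by (simp_all add: rung_left_def rung_right_def)
  ultimately show ?thesis
    using assms chain_ladder.in_nbrs_edges[of D L v] rung_inn[of D v] by simp
qed

definition rung_moves :: "nat \<Rightarrow> nat \<Rightarrow> nat move list" where
  "rung_moves D j = (let x = j mod 2 in
     [Load [(x, rung_left D (j - 1))], Compute [(x, rung_left D j)], Save [(x, rung_left D j)],
      DelRed x (rung_left D j), Compute [(x, rung_right D j)], DelRed x (rung_left D (j - 1)),
      DelRed x (rung_right D (j - 2))])"

definition rung_config :: "nat \<Rightarrow> nat \<Rightarrow> nat config" where
  "rung_config D j = config2 (j mod 2)
     (insert (rung_right D (j - 2)) (chain D (j mod 2)))
     (insert (rung_right D (j - 1)) (chain D (1 - j mod 2)))
     (rung_left D ` {..<j})"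

lemma rung_config_Suc:
  assumes "2 \<le> j"
  shows "rung_config D (Suc j) = config2 (j mod 2) (insert (rung_right D j) (chain D (j mod 2)))
     (insert (rung_right D (j - 1)) (chain D (1 - j mod 2))) (insert (rung_left D j) (rung_left D ` {..<j}))"
proof -
  have "Suc j mod 2 = 1 - j mod 2" "Suc j - 2 = j - 1" "Suc j - 1 = j" using assms by presburger+
  then have "rung_config D (Suc j) = config2 (1 - j mod 2)
      (insert (rung_right D (j - 1)) (chain D (1 - j mod 2))) (insert (rung_right D j) (chain D (j mod 2)))
      (insert (rung_left D j) (rung_left D ` {..<j}))"
    unfolding rung_config_def by (simp add: lessThan_Suc)
  also have "\<dots> = config2 (j mod 2) (insert (rung_right D j) (chain D (j mod 2)))
      (insert (rung_right D (j - 1)) (chain D (1 - j mod 2))) (insert (rung_left D j) (rung_left D ` {..<j}))"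
    by (rule config2_swap[symmetric]) simp
  finally show ?thesis .
qed

lemma rung_moves_run:
  assumes j: "2 \<le> j" "j < L"
  shows "valid_run (chain_ladder.nodes D L) (chain_ladder.edges D L) 2 (D + 3) (rung_config D j) (rung_moves D j)"
    and "fold apply_move (rung_moves D j) (rung_config D j) = rung_config D (Suc j)"
proof -
  let ?x = "j mod 2" and ?a = "rung_left D (j - 1)" and ?b = "rung_right D (j - 2)"
    and ?u = "rung_left D j" and ?w = "rung_right D j"
  let ?Y = "insert (rung_right D (j - 1)) (chain D (1 - ?x))"
  have rung_config: "rung_config D j = config2 ?x (insert ?b (chain D ?x)) ?Y (rung_left D ` {..<j})"
    by (simp add: rung_config_def)
  have rung_moves: "rung_moves D j = [Load [(?x, ?a)], Compute [(?x, ?u)], Save [(?x, ?u)],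
      DelRed ?x ?u, Compute [(?x, ?w)], DelRed ?x ?a, DelRed ?x ?b]"
    by (simp add: rung_moves_def Let_def)
  have "in_nbrs (chain_ladder.edges D L) ?u = insert ?a (insert ?b (chain D ?x))"
    "in_nbrs (chain_ladder.edges D L) ?w = insert ?a (insert ?b (chain D ?x))"
    by (simp_all add: in_nbrs_rung_node[OF j])
  moreover have "?u \<in> chain_ladder.nodes D L" "?w \<in> chain_ladder.nodes D L"
    using j by (auto simp: chain_ladder.nodes_def rung_left_def rung_right_def)
  moreover have "?a \<in> rung_left D ` {..<j}" using j by auto
  moreover have "?a \<notin> chain D ?x" "?b \<notin> chain D ?x" "?u \<notin> chain D ?x" "?w \<notin> chain D ?x"
    by (intro rung_notin_chain; use j in \<open>simp add: rung_left_def rung_right_def\<close>)+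
  moreover have "distinct [?a, ?b, ?u, ?w]"
    using j by (auto simp: rung_left_def rung_right_def)
  moreover have "card ?Y \<le> D + 3"
    by (simp add: card_insert_if)
  ultimately have "valid_run (chain_ladder.nodes D L) (chain_ladder.edges D L) 2 (D + 3)
      (rung_config D j) (rung_moves D j) \<and>
    fold apply_move (rung_moves D j) (rung_config D j) =
      config2 ?x (insert ?w (chain D ?x)) ?Y (insert ?u (rung_left D ` {..<j}))"
    unfolding rung_config rung_moves by (intro conjI valid_run_rung_pattern) simp_all
  then show "valid_run (chain_ladder.nodes D L) (chain_ladder.edges D L) 2 (D + 3) (rung_config D j) (rung_moves D j)"
    "fold apply_move (rung_moves D j) (rung_config D j) = rung_config D (Suc j)"
    using rung_config_Suc[OF j(1)] by simp_all
qed

lemma rung_moves_upto_run: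
  assumes "2 \<le> j" "j + n \<le> L"
  shows "valid_run (chain_ladder.nodes D L) (chain_ladder.edges D L) 2 (D + 3) (rung_config D j)
      (concat (map (rung_moves D) [j..<j + n])) \<and>
    fold apply_move (concat (map (rung_moves D) [j..<j + n])) (rung_config D j) = rung_config D (j + n)"
  using assms
proof (induction n)
  case 0
  have "card (insert a (chain D y)) \<le> D + 3" for a y by (simp add: card_insert_if)
  then show ?case by (simp add: rung_config_def config2_valid)
next
  case (Suc n)
  then show ?case
    using rung_moves_run[of "j + n" L D] by (simp add: valid_run_append)
qed

definition chain_moves :: "nat \<Rightarrow> nat move list" where
  "chain_moves n = map (\<lambda>i. Compute [(0, 2 * i), (1, 2 * i + 1)]) [0..<n]"

lemma chain_moves_run:
  assumes "n \<le> D"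
  shows "valid_run (chain_ladder.nodes D L) (chain_ladder.edges D L) 2 (D + 3) (config2 0 {} {} {})
      (chain_moves n) \<and>
    fold apply_move (chain_moves n) (config2 0 {} {} {}) = config2 0 (chain n 0) (chain n 1) {}"
  using assms
proof (induction n)
  case 0
  then show ?case by (simp add: chain_moves_def config2_valid)
next
  case (Suc n)
  have "chain_moves (Suc n) = chain_moves n @ [Compute [(0, 2 * n), (1, 2 * n + 1)]]"
    by (simp add: chain_moves_def)
  moreover have "2 * n \<in> chain_ladder.nodes D L" "2 * n + 1 \<in> chain_ladder.nodes D L"
    using Suc.prems by (auto simp: chain_ladder.nodes_def)
  moreover have "in_nbrs (chain_ladder.edges D L) (2 * n) \<subseteq> chain n 0"
    "in_nbrs (chain_ladder.edges D L) (2 * n + 1) \<subseteq> chain n 1"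
    using in_nbrs_chain_node[of "2 * n" D L] in_nbrs_chain_node[of "2 * n + 1" D L] Suc.prems by simp_all
  ultimately show ?case
    using Suc \<comment> \<open>the simplifier turns processor \<open>1\<close> into \<open>Suc 0\<close>\<close>
    by (simp add: valid_run_append config2_valid chain_Suc card_insert_if
        config2_compute_both[unfolded One_nat_def] config2_compute_both_ok[unfolded One_nat_def])
qed

definition rung0_moves :: "nat \<Rightarrow> nat move list" where
  "rung0_moves D = [Compute [(0, rung_left D 0)], Save [(0, rung_left D 0)], DelRed 0 (rung_left D 0),
     Compute [(0, rung_right D 0)]]"

definition rung1_moves :: "nat \<Rightarrow> nat move list" where
  "rung1_moves D = [Load [(1, rung_left D 0)], Compute [(1, rung_left D 1)], Save [(1, rung_left D 1)],
     DelRed 1 (rung_left D 1), Compute [(1, rung_right D 1)], DelRed 1 (rung_left D 0)]"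

lemma first_rungs_run:
  assumes "2 \<le> L"
  shows "valid_run (chain_ladder.nodes D L) (chain_ladder.edges D L) 2 (D + 3)
      (config2 0 (chain D 0) (chain D 1) {}) (rung0_moves D @ rung1_moves D) \<and>
    fold apply_move (rung0_moves D @ rung1_moves D) (config2 0 (chain D 0) (chain D 1) {}) = rung_config D 2"
proof -
  let ?u0 = "rung_left D 0" and ?w0 = "rung_right D 0" and ?u1 = "rung_left D 1" and ?w1 = "rung_right D 1"
  have fresh: "?u0 \<notin> chain D x" "?w0 \<notin> chain D x" "?u1 \<notin> chain D x" "?w1 \<notin> chain D x"
    if "x < 2" for x
    using that by (intro rung_notin_chain; simp add: rung_left_def rung_right_def)+
  have nodes: "?u0 \<in> chain_ladder.nodes D L" "?w0 \<in> chain_ladder.nodes D L"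
    "?u1 \<in> chain_ladder.nodes D L" "?w1 \<in> chain_ladder.nodes D L"
    using assms by (auto simp: chain_ladder.nodes_def rung_left_def rung_right_def)
  have nbrs: "in_nbrs (chain_ladder.edges D L) ?u0 = chain D 0"
    "in_nbrs (chain_ladder.edges D L) ?w0 = chain D 0"
    "in_nbrs (chain_ladder.edges D L) ?u1 = insert ?u0 (chain D 1)"
    "in_nbrs (chain_ladder.edges D L) ?w1 = insert ?u0 (chain D 1)"
    using nodes chain_ladder.in_nbrs_edges[of D L]
    by (auto simp: chain_ladder.nodes_def chain_ladder_inn_def rung_left_def rung_right_def)
  have distinct: "?u0 \<noteq> ?w0" "?u0 \<noteq> ?u1" "?u0 \<noteq> ?w1" "?u1 \<noteq> ?w1"
    by (simp_all add: rung_left_def rung_right_def)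
  have rung0: "valid_run (chain_ladder.nodes D L) (chain_ladder.edges D L) 2 (D + 3)
      (config2 0 (chain D 0) (chain D 1) {}) (rung0_moves D) \<and>
    fold apply_move (rung0_moves D) (config2 0 (chain D 0) (chain D 1) {}) =
      config2 1 (chain D 1) (insert ?w0 (chain D 0)) {?u0}"
    using nodes nbrs fresh[of 0] config2_swap[of 0 "insert ?w0 (chain D 0)"]
    by (simp add: rung0_moves_def config2_moves config2_moves_ok config2_valid card_insert_if)
  have rung1: "valid_run (chain_ladder.nodes D L) (chain_ladder.edges D L) 2 (D + 3)
      (config2 1 (chain D 1) (insert ?w0 (chain D 0)) {?u0}) (rung1_moves D) \<and>
    fold apply_move (rung1_moves D) (config2 1 (chain D 1) (insert ?w0 (chain D 0)) {?u0}) =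
      config2 1 (insert ?w1 (chain D 1)) (insert ?w0 (chain D 0)) {?u1, ?u0}"
    using nodes nbrs fresh[of 1] distinct
    by (simp add: rung1_moves_def config2_moves config2_moves_ok config2_valid card_insert_if
        insert_Diff_if insert_commute)
  have "rung_config D 2 = config2 1 (insert ?w1 (chain D 1)) (insert ?w0 (chain D 0)) {?u1, ?u0}"
    using config2_swap[of 1 "insert ?w1 (chain D 1)"]
    by (simp add: rung_config_def numeral_2_eq_2 lessThan_Suc)
  with rung0 rung1 show ?thesis by (simp add: valid_run_append)
qed

definition alternating_schedule :: "nat \<Rightarrow> nat \<Rightarrow> nat move list" where
  "alternating_schedule D L =
     chain_moves D @ rung0_moves D @ rung1_moves D @ concat (map (rung_moves D) [2..<L])"

lemma alternating_schedule_run: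
  assumes "2 \<le> L"
  shows "valid_run (chain_ladder.nodes D L) (chain_ladder.edges D L) 2 (D + 3) init_config
      (alternating_schedule D L) \<and>
    fold apply_move (alternating_schedule D L) init_config = rung_config D L"
proof -
  have L: "2 + (L - 2) = L" using assms by simp
  show ?thesis
    using chain_moves_run[of D D L] first_rungs_run[OF assms, of D]
      rung_moves_upto_run[of 2 "L - 2" L D, unfolded L]
    unfolding alternating_schedule_def init_config2 by (simp add: valid_run_append)
qed

lemma strategy_cost_alternating_schedule_le:
  assumes "2 \<le> L"
  shows "strategy_cost g (alternating_schedule D L) \<le> D + L * (2 + 2 * g)"
proof -
  have append: "strategy_cost g (xs @ ys) = strategy_cost g xs + strategy_cost g ys" for xs ys :: "nat move list"
    by (simp add: strategy_cost_def)
  have "strategy_cost g (concat (map (rung_moves D) xs)) = length xs * (2 + 2 * g)" for xs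
    by (induction xs) (simp_all add: append, simp_all add: strategy_cost_def rung_moves_def Let_def)
  moreover have "strategy_cost g (chain_moves D) = D"
    by (simp add: strategy_cost_def chain_moves_def comp_def sum_list_triv)
  moreover have "strategy_cost g (rung0_moves D) = 2 + g" "strategy_cost g (rung1_moves D) = 2 + 2 * g"
    by (simp_all add: strategy_cost_def rung0_moves_def rung1_moves_def)
  ultimately have "strategy_cost g (alternating_schedule D L) =
      D + (2 + g) + (2 + 2 * g) + (L - 2) * (2 + 2 * g)"
    unfolding alternating_schedule_def append by simp
  moreover obtain k where "L = k + 2" using assms by (metis add.commute le_Suc_ex)
  ultimately show ?thesis by (simp add: algebra_simps)
qed

text \<open>The odd node of rung \<open>i\<close> is an in-neighbour of rung \<open>i + 2\<close>, so the only odd rung nodes that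
  can be sinks are those of the last two rungs, which the final configuration keeps in fast memory.\<close>

lemma rung_config_terminal:
  assumes L: "2 \<le> L"
  shows "terminal_config (chain_ladder.nodes D L) (chain_ladder.edges D L) 2 (rung_config D L)"
  unfolding terminal_config_def
proof (intro allI impI)
  fix v
  assume sink: "is_sink (chain_ladder.nodes D L) (chain_ladder.edges D L) v"
  let ?x = "L mod 2"
  have v: "v < 2 * (D + L)" using sink by (simp add: is_sink_def chain_ladder.nodes_def)
  have "v \<in> rung_left D ` {..<L} \<union> insert (rung_right D (L - 2)) (chain D ?x)
      \<union> insert (rung_right D (L - 1)) (chain D (1 - ?x))"
  proof (cases "v < 2 * D")
    case True
    have "v mod 2 = ?x \<or> v mod 2 = 1 - ?x" by presburger
    then show ?thesis using True mem_chain_iff[of ?x v D] mem_chain_iff[of "1 - ?x" v D] by auto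
  next
    case False
    define i where "i = v div 2 - D"
    have "v div 2 < D + L" using v by (intro less_mult_imp_div_less) (simp add: mult.commute)
    then have i: "i < L" using L unfolding i_def by linarith
    have "D \<le> v div 2" using False by presburger
    then have v_eq: "v = 2 * (D + i) + v mod 2" unfolding i_def by simp
    consider "v = rung_left D i" | "v = rung_right D i"
    proof (cases "v mod 2 = 0")
      case False
      then have "v mod 2 = 1" by presburger
      then show ?thesis using that(2) v_eq by (simp add: rung_right_def)
    qed (use v_eq in \<open>simp add: rung_left_def\<close>)
    then show ?thesis
    proof cases
      case 2
      have "\<not> i + 2 < L"
      proof
        assume "i + 2 < L"
        then have "(v, rung_left D (i + 2)) \<in> chain_ladder.edges D L"
          using rung_inn[of D "rung_left D (i + 2)"] 2
          by (simp add: chain_ladder.edges_def rung_left_def rung_right_def)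
        then show False using sink by (auto simp: is_sink_def)
      qed
      then have "i = L - 2 \<or> i = L - 1" using i by linarith
      then show ?thesis using 2 by auto
    qed (use i in auto)
  qed
  moreover have "L mod 2 < 2" by simp
  ultimately show "v \<in> snd (rung_config D L) \<union> (\<Union>j<2. fst (rung_config D L) j)"
    unfolding rung_config_def by (simp add: config2_pebbled)
qed

lemma alternating_schedule_pebbling:
  assumes "2 \<le> L"
  shows "pebbling_strategy (chain_ladder.nodes D L) (chain_ladder.edges D L) 2 (D + 3)
    (alternating_schedule D L)"
proof (rule pebbling_strategy_of_valid_run)
  show "valid_run (chain_ladder.nodes D L) (chain_ladder.edges D L) 2 (D + 3) init_config
      (alternating_schedule D L)"
    using alternating_schedule_run[OF assms] by blast
  show "terminal_config (chain_ladder.nodes D L) (chain_ladder.edges D L) 2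
      (fold apply_move (alternating_schedule D L) init_config)"
    using alternating_schedule_run[OF assms] rung_config_terminal[OF assms] by simp
qed

lemma chain_ladder_ratio_arith:
  fixes d g l :: real
  assumes d: "d \<ge> 4" and g: "g \<ge> 1" and l: "l \<ge> 2 * d * (g + 1) + d * d + 3"
  shows "(d - 3) / 5 * (d + l * (2 + 2 * g)) \<le> (l - 3) * (d * (g + 1) / 2 + 1)"
proof -
  define A where "A = d * (g + 1) / 2 + 1"
  define c where "c = (d - 3) / 5"
  have "A - c * (2 + 2 * g) = (g + 1) * (d + 12) / 10 + 1"
    unfolding A_def c_def by (simp add: field_simps)
  moreover have "(g + 1) * (d + 12) / 10 \<ge> 0" using d g by simp
  ultimately have "1 \<le> A - c * (2 + 2 * g)" by linarith
  moreover have "0 \<le> l" using l d g by (smt (verit) mult_nonneg_nonneg)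
  ultimately have "l * 1 \<le> l * (A - c * (2 + 2 * g))"
    by (intro mult_left_mono)
  moreover have "3 * A \<le> 2 * d * (g + 1) + 3" "c * d \<le> d * d"
    unfolding A_def c_def using d g by (simp_all add: field_simps)
  ultimately have "c * (d + l * (2 + 2 * g)) \<le> (l - 3) * A"
    using l by (simp add: algebra_simps)
  then show ?thesis unfolding A_def c_def .
qed

lemma greedy_ratio_chain_ladder:
  assumes D: "4 \<le> D" and g: "1 \<le> g" and L: "2 * D * (g + 1) + D * D + 3 \<le> L"
    and greedy: "greedy_strategy rl (chain_ladder.nodes D L) (chain_ladder.edges D L) 2 (D + 3) ms"
  shows "(real D - 3) / 5 * real (mpp_opt (chain_ladder.nodes D L) (chain_ladder.edges D L) 2 (D + 3) g)
    \<le> real (strategy_cost g ms)"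
proof -
  interpret chain_ladder_greedy D L rl ms
    by (intro chain_ladder_greedy.intro layered_greedy.intro chain_ladder.layered_dag_axioms
        layered_greedy_axioms.intro greedy)
  have "mpp_opt (chain_ladder.nodes D L) (chain_ladder.edges D L) 2 (D + 3) g
      \<le> strategy_cost g (alternating_schedule D L)"
    using L by (intro mpp_opt_le alternating_schedule_pebbling) simp
  also have "\<dots> \<le> D + L * (2 + 2 * g)"
    using L by (intro strategy_cost_alternating_schedule_le) simp
  finally have "real (mpp_opt (chain_ladder.nodes D L) (chain_ladder.edges D L) 2 (D + 3) g)
      \<le> real (D + L * (2 + 2 * g))"
    by (simp only: of_nat_le_iff)
  then have "real (mpp_opt (chain_ladder.nodes D L) (chain_ladder.edges D L) 2 (D + 3) g)
      \<le> real D + real L * (2 + 2 * real g)"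
    by (simp add: algebra_simps)
  then have "(real D - 3) / 5 * real (mpp_opt (chain_ladder.nodes D L) (chain_ladder.edges D L) 2 (D + 3) g)
      \<le> (real D - 3) / 5 * (real D + real L * (2 + 2 * real g))"
    using D by (intro mult_left_mono) simp_all
  also have "\<dots> \<le> (real L - 3) * (real D * (real g + 1) / 2 + 1)"
  proof (rule chain_ladder_ratio_arith)
    have "real (2 * D * (g + 1) + D * D + 3) \<le> real L" using L by (simp only: of_nat_le_iff)
    then show "2 * real D * (real g + 1) + real D * real D + 3 \<le> real L" by (simp add: algebra_simps)
  qed (use D g in simp_all)
  also have "\<dots> \<le> real (strategy_cost g ms)"
    using greedy_cost_chain_ladder[of g] L g by (simp add: of_nat_diff)
  finally show ?thesis .
qed

theorem greedy_ratio_in_degree: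
  "\<forall>\<Delta> g :: nat. \<Delta> \<ge> 2 \<longrightarrow> g \<ge> 2 \<longrightarrow>
      (\<exists>(V :: nat \<Rightarrow> nat set) (E :: nat \<Rightarrow> (nat \<times> nat) set) (r :: nat \<Rightarrow> nat).
         (\<forall>N. is_dag (V N) (E N) \<and> max_indeg (V N) (E N) = \<Delta> \<and> r N \<ge> \<Delta> + 1) \<and>
         filterlim (\<lambda>N. card (V N)) at_top sequentially \<and>
         (\<forall>\<^sub>F N in sequentially. \<forall>ms. greedy_strategy rl (V N) (E N) 2 (r N) ms \<longrightarrow>
            real (strategy_cost g ms) \<ge> (real \<Delta> / 5 - 1) * real (mpp_opt (V N) (E N) 2 (r N) g)))"
proof (intro allI impI)
  fix \<Delta> g :: nat
  assume \<Delta>: "\<Delta> \<ge> 2" and g: "g \<ge> 2"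
  define D where "D = \<Delta> - 2"
  let ?L = "\<lambda>N. N + (2 * D * (g + 1) + D * D + 3)"
  have \<Delta>_eq: "\<Delta> = D + 2" using \<Delta> unfolding D_def by simp
  show "\<exists>(V :: nat \<Rightarrow> nat set) (E :: nat \<Rightarrow> (nat \<times> nat) set) (r :: nat \<Rightarrow> nat).
         (\<forall>N. is_dag (V N) (E N) \<and> max_indeg (V N) (E N) = \<Delta> \<and> r N \<ge> \<Delta> + 1) \<and>
         filterlim (\<lambda>N. card (V N)) at_top sequentially \<and>
         (\<forall>\<^sub>F N in sequentially. \<forall>ms. greedy_strategy rl (V N) (E N) 2 (r N) ms \<longrightarrow>
            real (strategy_cost g ms) \<ge> (real \<Delta> / 5 - 1) * real (mpp_opt (V N) (E N) 2 (r N) g))"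
  proof (intro exI[of _ "\<lambda>N. chain_ladder.nodes D (?L N)"] exI[of _ "\<lambda>N. chain_ladder.edges D (?L N)"]
      exI[of _ "\<lambda>N. D + 3"] conjI allI impI always_eventually)
    fix N
    show "is_dag (chain_ladder.nodes D (?L N)) (chain_ladder.edges D (?L N))"
      by (rule chain_ladder.is_dag)
    show "max_indeg (chain_ladder.nodes D (?L N)) (chain_ladder.edges D (?L N)) = \<Delta>"
      unfolding \<Delta>_eq by (rule max_indeg_chain_ladder) simp
    show "\<Delta> + 1 \<le> D + 3" using \<Delta>_eq by simp
  next
    show "filterlim (\<lambda>N. card (chain_ladder.nodes D (?L N))) at_top sequentially"
      unfolding chain_ladder.card_nodes add.left_commute[of D] by (rule filterlim_double_shift)
  next
    fix N ms
    assume greedy: "greedy_strategy rl (chain_ladder.nodes D (?L N)) (chain_ladder.edges D (?L N)) 2 (D + 3) ms"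
    show "(real \<Delta> / 5 - 1) * real (mpp_opt (chain_ladder.nodes D (?L N)) (chain_ladder.edges D (?L N)) 2 (D + 3) g)
      \<le> real (strategy_cost g ms)"
    proof (cases "4 \<le> D")
      case True
      have "real \<Delta> / 5 - 1 = (real D - 3) / 5" using \<Delta>_eq by simp
      moreover have "(real D - 3) / 5 * real (mpp_opt (chain_ladder.nodes D (?L N))
          (chain_ladder.edges D (?L N)) 2 (D + 3) g) \<le> real (strategy_cost g ms)"
        by (rule greedy_ratio_chain_ladder[OF True _ _ greedy]) (use g in simp_all)
      ultimately show ?thesis by (simp only:)
    next
      case False
      then have "real \<Delta> / 5 - 1 \<le> 0" using \<Delta>_eq by simp
      then show ?thesis by (simp add: mult_nonpos_nonneg order.trans[OF _ of_nat_0_le_iff])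
    qed
  qed
qed

theorem lemma4:
  fixes rl :: greedy_rule
  shows
  "(\<forall>\<Delta> g :: nat. \<Delta> \<ge> 2 \<longrightarrow> g \<ge> 2 \<longrightarrow>
      (\<exists>(V :: nat \<Rightarrow> nat set) (E :: nat \<Rightarrow> (nat \<times> nat) set) (r :: nat \<Rightarrow> nat).
         (\<forall>N. is_dag (V N) (E N) \<and> max_indeg (V N) (E N) = \<Delta> \<and> r N \<ge> \<Delta> + 1) \<and>
         filterlim (\<lambda>N. card (V N)) at_top sequentially \<and>
         (\<forall>\<^sub>F N in sequentially. \<forall>ms. greedy_strategy rl (V N) (E N) 2 (r N) ms \<longrightarrow>
            real (strategy_cost g ms) \<ge> (real \<Delta> / 5 - 1) * real (mpp_opt (V N) (E N) 2 (r N) g))))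
   \<and>
   (\<forall>g :: nat. g \<ge> 2 \<longrightarrow>
      (\<exists>(V :: nat \<Rightarrow> nat set) (E :: nat \<Rightarrow> (nat \<times> nat) set) (r :: nat \<Rightarrow> nat).
         (\<forall>N. is_dag (V N) (E N) \<and> r N \<ge> card (V N)) \<and>
         filterlim (\<lambda>N. card (V N)) at_top sequentially \<and>
         (\<forall>\<epsilon> > 0. \<forall>\<^sub>F N in sequentially. \<forall>ms. greedy_strategy rl (V N) (E N) 2 (r N) ms \<longrightarrow>
            real (strategy_cost g ms) \<ge> (1 + 2 / 3 * real g - \<epsilon>) * real (mpp_opt (V N) (E N) 2 (r N) g))))"
  using greedy_ratio_in_degree greedy_ratio_io_cost by (rule conjI)

end
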